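(* (1) Suppose $\frac{\psi(x)}{\sqrt x}$ is increasing on $(0,1)$, $\psi_1(x):=\frac{\psi(x)}{x}$ is decreasing on $(0,1)$, and the halving property holds: (H) there exists $K>1$ such that $\psi_1(Kx)\le\frac12\psi_1(x)$ for all $x\in(0,1/K]$. Then there exist $0<c<C$ such that for all $\delta\in(0,\delta_0]$ and $(x_N,x_T)\in\mathbb C^2$ with $x_N\ne0$, $|x_T|\le|x_N|$, \[ c\,F_3\!\left(\delta,\left|\frac{x_T}{x_N}\right|\right)|x_N|\le\kappa_{G_\psi}(p_\delta;(x_N,x_T))\le C\,F_3\!\left(\delta,\left|\frac{x_T}{x_N}\right|\right)|x_N|, \] where $F_3(\delta,t):=\min\left(\frac{\sqrt{\psi^{-1}(\delta)}}{\delta},\ \frac{8t}{\sqrt{\psi_1^{-1}(\frac{1}{8t})}}\right)$. (2) Let $\psi(x)=x$. Then there exist $0<c<C$ such that for all $\delta\in(0,\delta_0]$ and all $(x_N,x_T)\in\mathbb C^2$, \[ c\max\left(\frac{|x_N|-|x_T|}{\sqrt\delta},|x_T|\right)\le\kappa_{G_\psi}(p_\delta;(x_N,x_T))\le C\max\left(\frac{|x_N|-|x_T|}{\sqrt\delta},|x_T|\right). \] (3) If $\frac{\psi(x)}{x}$ is increasing on $(0,1)$, there exists $C>0$ such that if $0<\delta<\psi(1)$ (with $\delta\le\delta_0$) and $|x_T|\le\frac{\psi^{-1}(\delta)}{8\delta}|x_N|$, then \[ \frac{1}{4\sqrt2}\frac{\sqrt{\psi^{-1}(\delta)}}{\delta}|x_N|\le\kappa_{G_\psi}(p_\delta;(x_N,x_T))\le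 C\frac{\sqrt{\psi^{-1}(\delta)}}{\delta}|x_N|. \]
   Context: $\mathbb D$ is the unit disc in $\mathbb C$. $\psi:[0,1]\to[0,\infty)$ is continuous with $\psi(0)=0$, $\psi(1)>0$, and $G_\psi:=\{z\in\mathbb D^2:\Re z_1<\psi(|z_2|)\}$. For $\delta\in(0,1)$, $p_\delta:=(-\delta,0)$. Standing assumption: $\delta\in(0,\delta_0]$ for a fixed $\delta_0<1$; all constants depend only on $\psi$ and $\delta_0$. $\psi^{-1}$ and $\psi_1^{-1}$ denote the inverse functions of $\psi$ and $\psi_1$ (assumed well defined at the arguments used). The Kobayashi–Royden metric of a domain $\Omega\subset\mathbb C^d$ is $\kappa_\Omega(z;X)=\inf\{\lambda^{-1}:\lambda>0,\ \exists\varphi:\mathbb D\to\Omega \text{ holomorphic},\ \varphi(0)=z,\ \varphi'(0)=\lambda X\}$. *)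

theory Defs
  imports "HOL-Analysis.Analysis"
begin

text \<open>Kobayashi--Royden metric of a domain in C^2 (C^2 modelled as complex \<times> complex).
  A map phi from the unit disc is holomorphic iff both coordinate functions are.\<close>
definition kobayashi :: "(complex \<times> complex) set \<Rightarrow> complex \<times> complex \<Rightarrow> complex \<times> complex \<Rightarrow> real" where
  "kobayashi \<Omega> z X = Inf {1 / r | r. r > 0 \<and>
     (\<exists>\<phi> :: complex \<Rightarrow> complex \<times> complex.
        (\<lambda>w. fst (\<phi> w)) holomorphic_on ball 0 1 \<and>
        (\<lambda>w. snd (\<phi> w)) holomorphic_on ball 0 1 \<and>
        \<phi> ` ball 0 1 \<subseteq> \<Omega> \<and> \<phi> 0 = z \<and>
        deriv (\<lambda>w. fst (\<phi> w)) 0 = complex_of_real r * fst X \<and>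
        deriv (\<lambda>w. snd (\<phi> w)) 0 = complex_of_real r * snd X)}"

definition Gpsi :: "(real \<Rightarrow> real) \<Rightarrow> (complex \<times> complex) set" where
  "Gpsi \<psi> = {z. norm (fst z) < 1 \<and> norm (snd z) < 1 \<and> Re (fst z) < \<psi> (norm (snd z))}"

definition pdelta :: "real \<Rightarrow> complex \<times> complex" where
  "pdelta \<delta> = (complex_of_real (- \<delta>), 0)"

definition psi_inv :: "(real \<Rightarrow> real) \<Rightarrow> real \<Rightarrow> real" where
  "psi_inv \<psi> y = (THE x. x \<in> {0..1} \<and> \<psi> x = y)"

definition psi1_inv :: "(real \<Rightarrow> real) \<Rightarrow> real \<Rightarrow> real" where
  "psi1_inv \<psi> y = (THE x. x \<in> {0<..1} \<and> \<psi> x / x = y)"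

definition F3 :: "(real \<Rightarrow> real) \<Rightarrow> real \<Rightarrow> real \<Rightarrow> real" where
  "F3 \<psi> \<delta> t = min (sqrt (psi_inv \<psi> \<delta>) / \<delta>) (8 * t / sqrt (psi1_inv \<psi> (1 / (8 * t))))"

end

theory Submission
  imports Defs "HOL-Complex_Analysis.Complex_Analysis"
begin

text \<open>Upper bounds for the Kobayashi--Royden metric at \<open>p\<^sub>\<delta>\<close> come from explicit test discs
  \<open>w \<mapsto> (r x\<^sub>N w - \<delta>, r x\<^sub>T w + u w\<^sup>2 / 2)\<close> with \<open>|u| = 1\<close>; such a disc lies in
  \<open>G\<^sub>\<psi>\<close> as soon as \<open>r |x\<^sub>N| v - \<delta> < \<psi>(v (r |x\<^sub>T| + v / 2))\<close> for \<open>0 < v < 1\<close>, so the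
  quadratic term lets the growth of \<open>\<psi>\<close> absorb the normal component.

  Lower bounds hold for every disc \<open>\<phi>\<close> with \<open>\<phi>(0) = p\<^sub>\<delta>\<close> and \<open>\<phi>'(0) = r X\<close>. Schwarz's
  lemma gives \<open>r |x\<^sub>T| \<le> 1\<close>, and the Schwarz--Pick lemma keeps the second coordinate below
  \<open>\<rho> (\<rho> + r |x\<^sub>T|)\<close> on \<open>|w| < \<rho>\<close>. There the first coordinate lies in the half plane
  \<open>Re z\<^sub>1 < \<psi>(\<rho> (\<rho> + r |x\<^sub>T|))\<close>, and a Borel--Caratheodory estimate bounds
  \<open>r |x\<^sub>N|\<close>. Choosing \<open>\<rho>\<close> of the size of \<open>\<surd>\<psi>\<^sup>-\<^sup>1(\<delta>)\<close> in the normal regime and of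
  the size of \<open>r |x\<^sub>T|\<close> in the tangential one, where the halving property enters, matches
  the upper bounds up to constants.\<close>

section \<open>Schwarz-type estimates on the unit disc\<close>

lemma Schwarz_Lemma_le:
  fixes f :: "complex \<Rightarrow> complex"
  assumes hol: "f holomorphic_on ball 0 1" and f0: "f 0 = 0"
    and bd: "\<And>z. norm z < 1 \<Longrightarrow> norm (f z) \<le> 1" and z: "norm z < 1"
  shows "norm (f z) \<le> norm z"
proof (rule field_le_mult_one_interval)
  fix c :: real assume c: "0 < c" "c < 1"
  have "norm (of_real c * f z) \<le> norm z"
  proof (rule Schwarz_Lemma(1)[where f = "\<lambda>z. of_real c * f z"])
    show "(\<lambda>z. of_real c * f z) holomorphic_on ball 0 1"
      using hol by (intro holomorphic_intros)
    fix w :: complex assume "norm w < 1"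
    then have "c * norm (f w) < 1"
      using mult_left_le[OF bd, of w c] c by linarith
    then show "norm (of_real c * f w) < 1"
      using c by (simp add: norm_mult)
  qed (use f0 z in auto)
  then show "c * norm (f z) \<le> norm z"
    using c by (simp add: norm_mult)
qed

lemma Schwarz_factor:
  fixes f :: "complex \<Rightarrow> complex"
  assumes hol: "f holomorphic_on ball 0 1" and f0: "f 0 = 0"
    and bd: "\<And>z. norm z < 1 \<Longrightarrow> norm (f z) < 1"
  obtains h where "h holomorphic_on ball 0 1" "\<And>z. norm z < 1 \<Longrightarrow> f z = z * h z"
    "h 0 = deriv f 0" "\<And>z. norm z < 1 \<Longrightarrow> norm (h z) \<le> 1"
proof -
  obtain h where h: "h holomorphic_on ball 0 1" "\<And>z. norm z < 1 \<Longrightarrow> f z = z * h z"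
    "deriv f 0 = h 0"
    using Schwarz3[OF hol] f0 by metis
  have "norm (h z) \<le> 1" if z: "norm z < 1" for z
  proof (cases "z = 0")
    case True
    then show ?thesis
      using Schwarz_Lemma(2)[OF hol f0 bd, of 0] h(3) by simp
  next
    case False
    have "norm (z * h z) \<le> norm z"
      using Schwarz_Lemma(1)[OF hol f0 bd z] h(2)[OF z] by simp
    then show ?thesis
      using False by (simp add: norm_mult)
  qed
  then show ?thesis
    using that h by metis
qed

text \<open>The hypothesis bounds the pseudo-hyperbolic distance of \<open>h\<close> and \<open>a\<close> by \<open>\<rho>\<close>;
  expanding it gives \<open>(|h| - |a|)\<^sup>2 \<le> \<rho>\<^sup>2 (1 - |a||h|)\<^sup>2\<close>.\<close>
lemma norm_le_norm_add_pseudo_hyperbolic: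
  fixes a h :: complex
  assumes dist: "norm (h - a) \<le> \<rho> * norm (1 - cnj a * h)"
    and a: "norm a \<le> 1" and h: "norm h \<le> 1" and \<rho>: "0 \<le> \<rho>" "\<rho> \<le> 1"
  shows "norm h \<le> norm a + \<rho>"
proof -
  define b where "b = norm a"
  define x where "x = norm h"
  define P where "P = Re (cnj a * h)"
  have P: "P \<le> b * x"
    using complex_Re_le_cmod[of "cnj a * h"] by (simp add: P_def b_def x_def norm_mult)
  have "(norm (h - a))\<^sup>2 \<le> (\<rho> * norm (1 - cnj a * h))\<^sup>2"
    using dist by (simp add: power_mono)
  then have "x\<^sup>2 - 2 * P + b\<^sup>2 \<le> \<rho>\<^sup>2 * (1 - 2 * P + b\<^sup>2 * x\<^sup>2)"
    unfolding power_mult_distrib cmod_power2 x_def P_def b_def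
    by (simp add: power2_eq_square algebra_simps)
  moreover have "2 * P * (1 - \<rho>\<^sup>2) \<le> 2 * b * x * (1 - \<rho>\<^sup>2)"
    using P \<rho> by (intro mult_right_mono) (auto simp: power_le_one)
  ultimately have "(x - b)\<^sup>2 \<le> (\<rho> * (1 - b * x))\<^sup>2"
    by (simp add: power2_eq_square algebra_simps)
  moreover have "0 \<le> \<rho> * (1 - b * x)"
    using a h \<rho> by (simp add: b_def x_def mult_le_one)
  ultimately have "x - b \<le> \<rho> * (1 - b * x)"
    by (rule power2_le_imp_le)
  also have "\<dots> \<le> \<rho>"
    using \<rho> by (simp add: b_def x_def mult_left_le)
  finally show ?thesis
    by (simp add: b_def x_def)
qed

lemma Schwarz_Pick_le:
  fixes h :: "complex \<Rightarrow> complex"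
  assumes hol: "h holomorphic_on ball 0 1" and bd: "\<And>w. norm w < 1 \<Longrightarrow> norm (h w) \<le> 1"
    and h0: "norm (h 0) < 1" and z: "norm z < 1"
  shows "norm (h z - h 0) \<le> norm z * norm (1 - cnj (h 0) * h z)"
proof -
  define a where "a = h 0"
  have den: "1 - cnj a * h w \<noteq> 0" if "norm w < 1" for w
  proof -
    have "norm (cnj a * h w) < 1"
      using h0 bd[OF that] mult_left_le[of "norm (h w)" "norm a"] by (simp add: a_def norm_mult)
    then show ?thesis
      by auto
  qed
  define k where "k w = (h w - a) / (1 - cnj a * h w)" for w
  have holk: "k holomorphic_on ball 0 1"
    unfolding k_def using hol den by (intro holomorphic_intros) auto
  have k0: "k 0 = 0"
    by (simp add: k_def a_def)
  have k1: "norm (k w) \<le> 1" if w: "norm w < 1" for w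
  proof -
    have "(norm (h w - a))\<^sup>2 - (norm (1 - cnj a * h w))\<^sup>2
        = - ((1 - (norm a)\<^sup>2) * (1 - (norm (h w))\<^sup>2))"
      unfolding cmod_power2 by (simp add: power2_eq_square algebra_simps)
    also have "\<dots> \<le> 0"
      using h0 bd[OF w] by (simp add: a_def power_le_one mult_nonneg_nonneg)
    finally have "norm (h w - a) \<le> norm (1 - cnj a * h w)"
      using power2_le_imp_le[of "norm (h w - a)" "norm (1 - cnj a * h w)"] by simp
    then show ?thesis
      using den[OF w] by (simp add: k_def norm_divide divide_le_eq_1)
  qed
  have "norm (k z) \<le> norm z"
    using Schwarz_Lemma_le[OF holk k0 k1 z] .
  then show ?thesis
    using den[OF z] by (simp add: k_def a_def norm_divide divide_le_eq)
qed

lemma Schwarz_Pick_growth: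
  fixes f :: "complex \<Rightarrow> complex"
  assumes hol: "f holomorphic_on ball 0 1" and f0: "f 0 = 0"
    and bd: "\<And>z. norm z < 1 \<Longrightarrow> norm (f z) < 1" and z: "norm z < 1"
  shows "norm (f z) \<le> norm z * (norm z + norm (deriv f 0))"
proof -
  obtain h where h: "h holomorphic_on ball 0 1" "\<And>z. norm z < 1 \<Longrightarrow> f z = z * h z"
    "h 0 = deriv f 0" "\<And>z. norm z < 1 \<Longrightarrow> norm (h z) \<le> 1"
    using Schwarz_factor[OF hol f0 bd] by metis
  have "norm (h z) \<le> norm (h 0) + norm z"
  proof (cases "norm (h 0) < 1")
    case False
    then show ?thesis
      using h(4)[OF z] norm_ge_zero[of z] by linarith
  next
    case True
    from Schwarz_Pick_le[OF h(1) h(4) True z] show ?thesis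
      by (rule norm_le_norm_add_pseudo_hyperbolic) (use h(4)[of 0] h(4)[OF z] z in auto)
  qed
  then show ?thesis
    using h(2)[OF z] h(3) by (simp add: norm_mult mult_left_mono add.commute)
qed

lemma holomorphic_second_order_bound:
  fixes f :: "complex \<Rightarrow> complex"
  assumes hol: "f holomorphic_on ball 0 1"
    and bd: "\<And>z. norm z < 1 \<Longrightarrow> norm (f z) < 1" and z: "norm z < 1"
  shows "norm (f z - f 0 - deriv f 0 * z) \<le> 4 * (norm z)\<^sup>2"
proof -
  define F where "F w = (f w - f 0) / 2" for w
  have holF: "F holomorphic_on ball 0 1"
    unfolding F_def using hol by (intro holomorphic_intros) auto
  have F0: "F 0 = 0"
    by (simp add: F_def)
  have "norm (F w) < 1" if "norm w < 1" for w
  proof -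
    have "norm (f w - f 0) < 2"
      using norm_triangle_ineq4[of "f w" "f 0"] bd[OF that] bd[of 0] by simp
    then show ?thesis
      by (simp add: F_def norm_divide)
  qed
  then obtain H where H: "H holomorphic_on ball 0 1" "\<And>z. norm z < 1 \<Longrightarrow> F z = z * H z"
    "H 0 = deriv F 0" "\<And>z. norm z < 1 \<Longrightarrow> norm (H z) \<le> 1"
    using Schwarz_factor[OF holF F0] by metis
  have "(F has_field_derivative deriv f 0 / 2) (at 0)"
    using hol unfolding F_def by (auto intro!: derivative_eq_intros holomorphic_derivI)
  then have dF: "deriv F 0 = deriv f 0 / 2"
    by (rule DERIV_imp_deriv)
  define G where "G w = (H w - H 0) / 2" for w
  have holG: "G holomorphic_on ball 0 1"
    unfolding G_def using H(1) by (intro holomorphic_intros) auto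
  have G0: "G 0 = 0"
    by (simp add: G_def)
  have G1: "norm (G w) \<le> 1" if "norm w < 1" for w
    using norm_triangle_ineq4[of "H w" "H 0"] H(4)[OF that] H(4)[of 0]
    by (simp add: G_def norm_divide)
  have Gz: "norm (G z) \<le> norm z"
    using Schwarz_Lemma_le[OF holG G0 G1 z] .
  have "f z - f 0 - deriv f 0 * z = 4 * z * G z"
    using H(2)[OF z] H(3) dF by (simp add: F_def G_def algebra_simps)
  then have "norm (f z - f 0 - deriv f 0 * z) = 4 * norm z * norm (G z)"
    by (simp add: norm_mult)
  also have "\<dots> \<le> 4 * norm z * norm z"
    using Gz by (simp add: mult_left_mono)
  finally show ?thesis
    by (simp add: power2_eq_square)
qed

lemma norm_less_norm_reflection:
  fixes w :: complex
  assumes "0 < A" "Re w < A"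
  shows "norm w < norm (of_real (2 * A) - w)"
proof -
  have "(norm w)\<^sup>2 < (norm (of_real (2 * A) - w))\<^sup>2"
    using assms unfolding cmod_power2
    by (simp add: power2_eq_square algebra_simps mult_strict_left_mono)
  then show ?thesis
    by (rule power_less_imp_less_base) simp
qed

text \<open>A Borel--Caratheodory type estimate: the map \<open>W \<mapsto> W / (2A - W)\<close> sends the half
  plane \<open>Re W < A\<close> into the unit disc, and Schwarz's lemma bounds its derivative.\<close>
lemma deriv_bound_Re_less_unit:
  fixes f :: "complex \<Rightarrow> complex"
  assumes hol: "f holomorphic_on ball 0 1" and bd: "\<And>z. norm z < 1 \<Longrightarrow> Re (f z) < M"
  shows "norm (deriv f 0) \<le> 2 * (M - Re (f 0))"
proof -
  define A where "A = M - Re (f 0)"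
  have A: "A > 0"
    using bd[of 0] by (simp add: A_def)
  define W where "W w = f w - f 0" for w
  define g where "g w = W w / (of_real (2 * A) - W w)" for w
  have Wlt: "norm (W w) < norm (of_real (2 * A) - W w)" if "norm w < 1" for w
    using bd[OF that] A by (intro norm_less_norm_reflection) (auto simp: W_def A_def)
  then have den: "of_real (2 * A) - W w \<noteq> 0" if "norm w < 1" for w
    using that by fastforce
  have holg: "g holomorphic_on ball 0 1"
    unfolding g_def W_def using hol den by (intro holomorphic_intros) (auto simp: W_def)
  have g0: "g 0 = 0"
    by (simp add: g_def W_def)
  have g1: "norm (g w) < 1" if "norm w < 1" for w
    using Wlt[OF that] den[OF that] by (simp add: g_def norm_divide divide_less_eq)
  have dW: "(W has_field_derivative deriv f 0) (at 0)"
    unfolding W_def using hol by (auto intro!: derivative_eq_intros holomorphic_derivI)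
  have "((\<lambda>w. of_real (2 * A) - W w) has_field_derivative - deriv f 0) (at 0)"
    using dW by (auto intro!: derivative_eq_intros)
  from DERIV_divide[OF dW this]
  have "(g has_field_derivative deriv f 0 / of_real (2 * A)) (at 0)"
    using A unfolding g_def by (simp add: W_def field_simps)
  then have "deriv g 0 = deriv f 0 / of_real (2 * A)"
    by (rule DERIV_imp_deriv)
  then have "norm (deriv f 0) / (2 * A) \<le> 1"
    using Schwarz_Lemma(2)[OF holg g0 g1, of 0] A by (simp add: norm_divide)
  then show ?thesis
    using A by (simp add: A_def field_simps)
qed

lemma deriv_bound_Re_less:
  fixes f :: "complex \<Rightarrow> complex"
  assumes hol: "f holomorphic_on ball 0 1" and \<rho>: "0 < \<rho>" "\<rho> \<le> 1"
    and bd: "\<And>z. norm z < \<rho> \<Longrightarrow> Re (f z) < M"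
  shows "norm (deriv f 0) \<le> 2 * (M - Re (f 0)) / \<rho>"
proof -
  define g where "g w = f (of_real \<rho> * w)" for w
  have scaled: "norm (of_real \<rho> * w) < \<rho>" if "norm w < 1" for w :: complex
    using \<rho> that by (simp add: norm_mult mult_less_cancel_left1)
  then have "(\<lambda>w::complex. of_real \<rho> * w) ` ball 0 1 \<subseteq> ball 0 1"
    using \<rho> by (force simp: dist_norm)
  then have "g holomorphic_on ball 0 1"
    unfolding g_def using holomorphic_on_compose_gen[OF _ hol]
    by (auto simp: o_def intro!: holomorphic_intros)
  moreover have "Re (g w) < M" if "norm w < 1" for w
    using bd[OF scaled[OF that]] by (simp add: g_def)
  ultimately have "norm (deriv g 0) \<le> 2 * (M - Re (g 0))"
    by (rule deriv_bound_Re_less_unit)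
  moreover have "(f has_field_derivative deriv f 0) (at (of_real \<rho> * 0))"
    using hol by (auto intro!: holomorphic_derivI)
  then have "(g has_field_derivative deriv f 0 * of_real \<rho>) (at 0)"
    unfolding g_def using DERIV_chain2[of f "deriv f 0" "\<lambda>w. of_real \<rho> * w" 0 "of_real \<rho>"]
    by (auto intro!: derivative_eq_intros)
  then have "deriv g 0 = deriv f 0 * of_real \<rho>"
    by (rule DERIV_imp_deriv)
  ultimately show ?thesis
    using \<rho> by (simp add: g_def norm_mult field_simps)
qed

section \<open>Holomorphic discs through \<open>p\<^sub>\<delta>\<close>\<close>

definition pdelta_disc ::
    "(real \<Rightarrow> real) \<Rightarrow> real \<Rightarrow> complex \<times> complex \<Rightarrow> real \<Rightarrow> (complex \<Rightarrow> complex \<times> complex) \<Rightarrow> bool"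
  where "pdelta_disc \<psi> \<delta> X r \<phi> \<longleftrightarrow> r > 0 \<and>
        (\<lambda>w. fst (\<phi> w)) holomorphic_on ball 0 1 \<and>
        (\<lambda>w. snd (\<phi> w)) holomorphic_on ball 0 1 \<and>
        \<phi> ` ball 0 1 \<subseteq> Gpsi \<psi> \<and> \<phi> 0 = pdelta \<delta> \<and>
        deriv (\<lambda>w. fst (\<phi> w)) 0 = of_real r * fst X \<and>
        deriv (\<lambda>w. snd (\<phi> w)) 0 = of_real r * snd X"

lemma kobayashi_pdelta:
  "kobayashi (Gpsi \<psi>) (pdelta \<delta>) X = Inf {1 / r | r. \<exists>\<phi>. pdelta_disc \<psi> \<delta> X r \<phi>}"
  unfolding kobayashi_def pdelta_disc_def by (rule arg_cong[where f = Inf]) blast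

lemma kobayashi_le_inverse:
  "pdelta_disc \<psi> \<delta> X r \<phi> \<Longrightarrow> kobayashi (Gpsi \<psi>) (pdelta \<delta>) X \<le> 1 / r"
  unfolding kobayashi_pdelta
  by (rule cInf_lower) (auto simp: bdd_below_def pdelta_disc_def intro!: exI[of _ 0])

lemma kobayashi_greatest:
  assumes "\<exists>r \<phi>. pdelta_disc \<psi> \<delta> X r \<phi>" and "\<And>r \<phi>. pdelta_disc \<psi> \<delta> X r \<phi> \<Longrightarrow> L \<le> 1 / r"
  shows "L \<le> kobayashi (Gpsi \<psi>) (pdelta \<delta>) X"
  unfolding kobayashi_pdelta using assms by (intro cInf_greatest) auto

lemma kobayashi_zero_vector:
  assumes "0 < \<delta>" "\<delta> < 1" "0 \<le> \<psi> 0"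
  shows "kobayashi (Gpsi \<psi>) (pdelta \<delta>) (0, 0) = 0"
proof -
  have disc: "pdelta_disc \<psi> \<delta> (0, 0) r (\<lambda>_. pdelta \<delta>)" if "r > 0" for r
    using assms that by (auto simp: pdelta_disc_def Gpsi_def pdelta_def)
  let ?k = "kobayashi (Gpsi \<psi>) (pdelta \<delta>) (0, 0)"
  have "?k \<le> 0"
  proof (rule ccontr)
    assume "\<not> ?k \<le> 0"
    then have "?k \<le> 1 / (2 / ?k)" "?k > 0"
      using kobayashi_le_inverse[OF disc[of "2 / ?k"]] by auto
    then show False
      by simp
  qed
  moreover have "0 \<le> ?k"
  proof (rule kobayashi_greatest)
    show "\<exists>r \<phi>. pdelta_disc \<psi> \<delta> (0, 0) r \<phi>"
      using disc zero_less_one by blast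
  qed (simp add: pdelta_disc_def)
  ultimately show ?thesis
    by simp
qed

lemma pdelta_discD:
  assumes "pdelta_disc \<psi> \<delta> (xN, xT) r \<phi>"
  shows "r > 0" "(\<lambda>w. fst (\<phi> w)) holomorphic_on ball 0 1" "(\<lambda>w. snd (\<phi> w)) holomorphic_on ball 0 1"
    "fst (\<phi> 0) = - of_real \<delta>" "snd (\<phi> 0) = 0"
    "\<And>w. norm w < 1 \<Longrightarrow> norm (fst (\<phi> w)) < 1"
    "\<And>w. norm w < 1 \<Longrightarrow> norm (snd (\<phi> w)) < 1"
    "\<And>w. norm w < 1 \<Longrightarrow> Re (fst (\<phi> w)) < \<psi> (norm (snd (\<phi> w)))"
    "deriv (\<lambda>w. fst (\<phi> w)) 0 = of_real r * xN"
    "deriv (\<lambda>w. snd (\<phi> w)) 0 = of_real r * xT"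
  using assms by (auto simp: pdelta_disc_def pdelta_def Gpsi_def image_subset_iff)

lemma norm_quadratic_bounds:
  fixes u \<zeta> :: complex
  assumes u: "norm u = 1" and \<zeta>: "norm \<zeta> < 1" and Ts: "0 \<le> T" "0 \<le> s" "T + s \<le> 1"
  shows "norm (u * \<zeta> * (of_real T + of_real s * \<zeta>)) \<le> norm \<zeta>"
    and "norm \<zeta> * (T + s * Re \<zeta>) \<le> norm (u * \<zeta> * (of_real T + of_real s * \<zeta>))"
proof -
  have S: "norm (u * \<zeta> * (of_real T + of_real s * \<zeta>)) = norm \<zeta> * norm (of_real T + of_real s * \<zeta>)"
    using u by (simp add: norm_mult)
  have "norm (of_real T + of_real s * \<zeta>) \<le> T + s * norm \<zeta>"
    using norm_triangle_ineq[of "of_real T" "of_real s * \<zeta>"] Ts by (simp add: norm_mult)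
  also have "\<dots> \<le> 1"
    using Ts \<zeta> mult_left_le[of "norm \<zeta>" s] by linarith
  finally show "norm (u * \<zeta> * (of_real T + of_real s * \<zeta>)) \<le> norm \<zeta>"
    unfolding S by (simp add: mult_left_le)
  have "T + s * Re \<zeta> \<le> norm (of_real T + of_real s * \<zeta>)"
    using complex_Re_le_cmod[of "of_real T + of_real s * \<zeta>"] by simp
  then show "norm \<zeta> * (T + s * Re \<zeta>) \<le> norm (u * \<zeta> * (of_real T + of_real s * \<zeta>))"
    unfolding S by (simp add: mult_left_mono)
qed

lemma quadratic_point_in_Gpsi:
  fixes \<psi> :: "real \<Rightarrow> real" and u \<zeta> :: complex
  assumes nonneg: "\<And>x. 0 \<le> x \<Longrightarrow> x \<le> 1 \<Longrightarrow> 0 \<le> \<psi> x"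
    and mono: "\<And>x y. 0 \<le> x \<Longrightarrow> x \<le> y \<Longrightarrow> y \<le> 1 \<Longrightarrow> \<psi> x \<le> \<psi> y"
    and pos: "0 < \<delta>" "0 \<le> N" "0 \<le> T" "0 \<le> s" and small: "\<delta> + N < 1" "T + s \<le> 1"
    and cond: "\<And>v. 0 < v \<Longrightarrow> v < 1 \<Longrightarrow> N * v - \<delta> < \<psi> (v * (T + s * v))"
    and u: "norm u = 1" and \<zeta>: "norm \<zeta> < 1"
  shows "(of_real N * \<zeta> - of_real \<delta>, u * \<zeta> * (of_real T + of_real s * \<zeta>)) \<in> Gpsi \<psi>"
proof -
  define p where "p = Re \<zeta>"
  have p: "p \<le> norm \<zeta>"
    using complex_Re_le_cmod by (simp add: p_def)
  have "norm (of_real N * \<zeta> - of_real \<delta>) \<le> N * norm \<zeta> + \<delta>"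
    using norm_triangle_ineq4[of "of_real N * \<zeta>" "of_real \<delta>"] pos by (simp add: norm_mult)
  also have "\<dots> < 1"
    using pos small \<zeta> mult_left_le[of "norm \<zeta>" N] by linarith
  finally have fst_norm: "norm (of_real N * \<zeta> - of_real \<delta>) < 1" .
  define S where "S = norm (u * \<zeta> * (of_real T + of_real s * \<zeta>))"
  have S: "S \<le> norm \<zeta>" "norm \<zeta> * (T + s * p) \<le> S"
    using norm_quadratic_bounds[OF u \<zeta> pos(3,4) small(2)] by (simp_all add: S_def p_def)
  have "Re (of_real N * \<zeta> - of_real \<delta>) < \<psi> S"
  proof (cases "p \<le> 0")
    case True
    then have "Re (of_real N * \<zeta> - of_real \<delta>) < 0"
      using pos mult_nonneg_nonpos[of N p] by (simp add: p_def)
    also have "0 \<le> \<psi> S"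
      using nonneg S \<zeta> by (simp add: S_def)
    finally show ?thesis .
  next
    case False
    have "p * (T + s * p) \<le> norm \<zeta> * (T + s * p)"
      using p False pos by (intro mult_right_mono) auto
    then have "\<psi> (p * (T + s * p)) \<le> \<psi> S"
      using mono S \<zeta> False pos by simp
    moreover have "N * p - \<delta> < \<psi> (p * (T + s * p))"
      using cond False p \<zeta> by simp
    ultimately show ?thesis
      by (simp add: p_def)
  qed
  then show ?thesis
    using fst_norm S \<zeta> unfolding Gpsi_def S_def by simp
qed

lemma quadratic_pdelta_disc:
  fixes \<psi> :: "real \<Rightarrow> real" and xN xT :: complex
  assumes nonneg: "\<And>x. 0 \<le> x \<Longrightarrow> x \<le> 1 \<Longrightarrow> 0 \<le> \<psi> x"
    and mono: "\<And>x y. 0 \<le> x \<Longrightarrow> x \<le> y \<Longrightarrow> y \<le> 1 \<Longrightarrow> \<psi> x \<le> \<psi> y"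
    and pos: "0 < \<delta>" "0 < r" "0 \<le> s"
    and small: "\<delta> + r * norm xN < 1" "r * norm xT + s \<le> 1"
    and cond: "\<And>v. 0 < v \<Longrightarrow> v < 1 \<Longrightarrow> r * norm xN * v - \<delta> < \<psi> (v * (r * norm xT + s * v))"
  shows "\<exists>\<phi>. pdelta_disc \<psi> \<delta> (xN, xT) r \<phi>"
proof -
  define u1 where "u1 = cis (Arg xN)"
  define u2 where "u2 = cis (Arg xT)"
  have xN: "xN = of_real (norm xN) * u1" and xT: "xT = of_real (norm xT) * u2"
    unfolding u1_def u2_def by (metis rcis_cmod_Arg rcis_def)+
  define \<phi> where "\<phi> w = (of_real (r * norm xN) * (u1 * w) - of_real \<delta>,
      u2 * w * (of_real (r * norm xT) + of_real s * (u1 * w)))" for w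
  have "((\<lambda>w. fst (\<phi> w)) has_field_derivative of_real r * xN) (at 0)"
    by (subst xN) (auto simp: \<phi>_def intro!: derivative_eq_intros)
  then have d1: "deriv (\<lambda>w. fst (\<phi> w)) 0 = of_real r * xN"
    by (rule DERIV_imp_deriv)
  have "((\<lambda>w. snd (\<phi> w)) has_field_derivative of_real r * xT) (at 0)"
    by (subst xT) (auto simp: \<phi>_def intro!: derivative_eq_intros)
  then have d2: "deriv (\<lambda>w. snd (\<phi> w)) 0 = of_real r * xT"
    by (rule DERIV_imp_deriv)
  have "\<phi> w \<in> Gpsi \<psi>" if "norm w < 1" for w
  proof -
    define \<zeta> where "\<zeta> = u1 * w"
    define u where "u = u2 * cis (- Arg xN)"
    have "u * \<zeta> = u2 * w"
      by (simp add: u_def \<zeta>_def u1_def cis_mult)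
    then have "\<phi> w = (of_real (r * norm xN) * \<zeta> - of_real \<delta>,
        u * \<zeta> * (of_real (r * norm xT) + of_real s * \<zeta>))"
      by (simp add: \<phi>_def flip: \<zeta>_def)
    moreover have "norm u = 1" "norm \<zeta> < 1"
      using that by (simp_all add: u_def \<zeta>_def u1_def u2_def norm_mult)
    ultimately show ?thesis
      using quadratic_point_in_Gpsi[OF nonneg mono pos(1) _ _ pos(3) small cond] pos by simp
  qed
  then have "pdelta_disc \<psi> \<delta> (xN, xT) r \<phi>"
    using pos d1 d2 unfolding pdelta_disc_def
    by (auto simp: \<phi>_def pdelta_def intro!: holomorphic_intros)
  then show ?thesis
    by blast
qed

lemma pdelta_disc_exists:
  fixes \<psi> :: "real \<Rightarrow> real"
  assumes nonneg: "\<And>x. 0 \<le> x \<Longrightarrow> x \<le> 1 \<Longrightarrow> 0 \<le> \<psi> x"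
    and mono: "\<And>x y. 0 \<le> x \<Longrightarrow> x \<le> y \<Longrightarrow> y \<le> 1 \<Longrightarrow> \<psi> x \<le> \<psi> y"
    and \<delta>: "0 < \<delta>" "\<delta> < 1"
  shows "\<exists>r \<phi>. pdelta_disc \<psi> \<delta> (xN, xT) r \<phi>"
proof -
  define r where "r = \<delta> * (1 - \<delta>) / (norm xN + norm xT + 1)"
  have "0 < norm xN + norm xT + 1"
    using norm_ge_zero[of xN] norm_ge_zero[of xT] by linarith
  then have r: "0 < r"
    using \<delta> by (simp add: r_def)
  have "r * (norm xN + norm xT) = \<delta> * (1 - \<delta>) * ((norm xN + norm xT) / (norm xN + norm xT + 1))"
    by (simp add: r_def)
  also have "\<dots> < \<delta> * (1 - \<delta>) * 1"
    using \<delta> \<open>0 < norm xN + norm xT + 1\<close> by (intro mult_strict_left_mono) auto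
  finally have "r * (norm xN + norm xT) < \<delta> * (1 - \<delta>)"
    by simp
  moreover have "0 \<le> r * norm xN" "0 \<le> r * norm xT"
    using r by simp_all
  ultimately have N: "r * norm xN < \<delta> * (1 - \<delta>)" and T: "r * norm xT < \<delta> * (1 - \<delta>)"
    unfolding distrib_left by linarith+
  have b1: "\<delta> * (1 - \<delta>) \<le> \<delta>" and b2: "\<delta> * (1 - \<delta>) \<le> 1 - \<delta>"
    using \<delta> mult_left_le_one_le[of "1 - \<delta>" \<delta>] by (simp_all add: mult_left_le)
  have b3: "\<delta> * (1 - \<delta>) \<le> 1 / 2"
    using zero_le_power2[of "\<delta> - 1 / 2"] by (simp add: power2_eq_square algebra_simps)
  have "\<exists>\<phi>. pdelta_disc \<psi> \<delta> (xN, xT) r \<phi>"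
  proof (rule quadratic_pdelta_disc[OF nonneg mono \<delta>(1) r, where s = "1 / 2"])
    fix v :: real assume v: "0 < v" "v < 1"
    have "0 \<le> v * (r * norm xT + 1 / 2 * v)" "v * (r * norm xT + 1 / 2 * v) \<le> 1"
      using v r T b3 by (auto intro!: mult_le_one)
    then have "0 \<le> \<psi> (v * (r * norm xT + 1 / 2 * v))"
      using nonneg by blast
    moreover have "r * norm xN * v \<le> r * norm xN"
      using v r by (intro mult_right_le_one_le) auto
    ultimately show "r * norm xN * v - \<delta> < \<psi> (v * (r * norm xT + 1 / 2 * v))"
      using N b1 by linarith
  qed (use N T b2 b3 in linarith)+
  then show ?thesis
    by blast
qed

lemma pdelta_disc_tangent_le:
  assumes "pdelta_disc \<psi> \<delta> (xN, xT) r \<phi>"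
  shows "r * norm xT \<le> 1"
proof -
  note D = pdelta_discD[OF assms]
  have "norm (deriv (\<lambda>w. snd (\<phi> w)) 0) \<le> 1"
    using Schwarz_Lemma(2)[OF D(3) D(5) D(7), of 0] by simp
  then show ?thesis
    using D(1) D(10) by (simp add: norm_mult)
qed

lemma pdelta_disc_snd_le:
  assumes "pdelta_disc \<psi> \<delta> (xN, xT) r \<phi>" and z: "norm z < 1"
  shows "norm (snd (\<phi> z)) \<le> norm z * (norm z + r * norm xT)"
proof -
  note D = pdelta_discD[OF assms(1)]
  show ?thesis
    using Schwarz_Pick_growth[OF D(3) D(5) D(7) z] D(1) D(10) by (simp add: norm_mult)
qed

lemma pdelta_disc_normal_le:
  assumes disc: "pdelta_disc \<psi> \<delta> (xN, xT) r \<phi>"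
    and mono: "\<And>x y. 0 \<le> x \<Longrightarrow> x \<le> y \<Longrightarrow> y \<le> 1 \<Longrightarrow> \<psi> x \<le> \<psi> y"
    and \<rho>: "0 < \<rho>" "\<rho> < 1" "\<rho> * (\<rho> + r * norm xT) \<le> 1"
  shows "r * norm xN \<le> 2 * (\<psi> (\<rho> * (\<rho> + r * norm xT)) + \<delta>) / \<rho>"
proof -
  note D = pdelta_discD[OF disc]
  have "Re (fst (\<phi> z)) < \<psi> (\<rho> * (\<rho> + r * norm xT))" if z: "norm z < \<rho>" for z
  proof -
    have z1: "norm z < 1"
      using z \<rho> by simp
    have "norm (snd (\<phi> z)) \<le> norm z * (norm z + r * norm xT)"
      by (rule pdelta_disc_snd_le[OF disc z1])
    also have "\<dots> \<le> \<rho> * (\<rho> + r * norm xT)"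
      using z D(1) \<rho> by (intro mult_mono add_right_mono) auto
    finally have "\<psi> (norm (snd (\<phi> z))) \<le> \<psi> (\<rho> * (\<rho> + r * norm xT))"
      using mono \<rho>(3) by simp
    then show ?thesis
      using D(8)[OF z1] by linarith
  qed
  then have "norm (deriv (\<lambda>w. fst (\<phi> w)) 0) \<le> 2 * (\<psi> (\<rho> * (\<rho> + r * norm xT)) - Re (fst (\<phi> 0))) / \<rho>"
    using deriv_bound_Re_less[OF D(2) \<rho>(1)] \<rho>(2) by simp
  then show ?thesis
    using D(1) D(9) D(4) by (simp add: norm_mult)
qed

lemma pdelta_disc_normal_le_id:
  assumes disc: "pdelta_disc (\<lambda>x. x) \<delta> (xN, xT) r \<phi>" and \<rho>: "0 < \<rho>" "\<rho> < 1"
  shows "r * norm xN * \<rho> - \<delta> - 4 * \<rho>\<^sup>2 < \<rho> * (\<rho> + r * norm xT)"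
proof -
  note D = pdelta_discD[OF disc]
  define z where "z = of_real \<rho> * cis (- Arg xN)"
  have nz: "norm z = \<rho>" and z1: "norm z < 1"
    using \<rho> by (simp_all add: z_def norm_mult)
  have "xN * cis (- Arg xN) = of_real (norm xN)"
    by (subst (1) rcis_cmod_Arg[symmetric]) (simp add: rcis_def cis_mult)
  then have lin: "deriv (\<lambda>w. fst (\<phi> w)) 0 * z = of_real (r * norm xN * \<rho>)"
    unfolding D(9) z_def by (simp add: algebra_simps)
  have "norm (fst (\<phi> z) - fst (\<phi> 0) - deriv (\<lambda>w. fst (\<phi> w)) 0 * z) \<le> 4 * (norm z)\<^sup>2"
    by (rule holomorphic_second_order_bound[OF D(2) D(6) z1])
  then have "norm (fst (\<phi> z) + of_real \<delta> - of_real (r * norm xN * \<rho>)) \<le> 4 * \<rho>\<^sup>2"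
    using D(4) lin nz by simp
  then have "r * norm xN * \<rho> - \<delta> - 4 * \<rho>\<^sup>2 \<le> Re (fst (\<phi> z))"
    using abs_Re_le_cmod[of "fst (\<phi> z) + of_real \<delta> - of_real (r * norm xN * \<rho>)"] by simp
  also have "\<dots> < norm (snd (\<phi> z))"
    using D(8)[OF z1] by simp
  also have "\<dots> \<le> \<rho> * (\<rho> + r * norm xT)"
    using pdelta_disc_snd_le[OF disc z1] nz by simp
  finally show ?thesis .
qed

section \<open>Monotonicity properties of the profile \<open>\<psi>\<close>\<close>

lemma mono_on_le_at_right_end:
  fixes g :: "real \<Rightarrow> real"
  assumes mono: "mono_on {a<..<b} g" and cont: "continuous_on {a<..b} g"
    and xy: "a < x" "x \<le> y" "y \<le> b"
  shows "g x \<le> g y"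
proof (cases "y < b")
  case True
  then show ?thesis
    using mono_onD[OF mono] xy by auto
next
  case False
  then have y: "y = b"
    using xy by simp
  show ?thesis
  proof (cases "x < b")
    case True
    have "continuous_on (closure {x<..<b}) g"
      using True xy by (auto intro: continuous_on_subset[OF cont])
    moreover have "g x \<le> g z" if "z \<in> {x<..<b}" for z
      using mono_onD[OF mono] that xy by auto
    ultimately show ?thesis
      using continuous_ge_on_closure[of "{x<..<b}" g b "g x"] True y by auto
  qed (use xy y in simp)
qed

lemma antimono_on_le_at_right_end:
  fixes g :: "real \<Rightarrow> real"
  assumes "antimono_on {a<..<b} g" "continuous_on {a<..b} g" "a < x" "x \<le> y" "y \<le> b"
  shows "g y \<le> g x"
  using mono_on_le_at_right_end[of a b "\<lambda>x. - g x" x y] assms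
  by (auto simp: monotone_on_def intro: continuous_intros)

lemma continuous_on_quotient_right:
  fixes \<psi> h :: "real \<Rightarrow> real"
  assumes "continuous_on {0..1} \<psi>" "continuous_on {0<..1} h" "\<And>x. 0 < x \<Longrightarrow> h x \<noteq> 0"
  shows "continuous_on {0<..1} (\<lambda>x. \<psi> x / h x)"
proof -
  have "continuous_on {0<..1} \<psi>"
    by (rule continuous_on_subset[OF assms(1)]) auto
  then show ?thesis
    using assms(2,3) by (intro continuous_intros) auto
qed

lemma strict_mono_where_pos_of_ratio_mono:
  fixes \<psi> h :: "real \<Rightarrow> real"
  assumes ratio: "\<And>x y. 0 < x \<Longrightarrow> x \<le> y \<Longrightarrow> y \<le> 1 \<Longrightarrow> \<psi> x / h x \<le> \<psi> y / h y"
    and h: "\<And>x y. 0 < x \<Longrightarrow> x < y \<Longrightarrow> h x < h y" "\<And>x. 0 < x \<Longrightarrow> 0 < h x"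
    and xy: "0 < x" "x < y" "y \<le> 1" and pos: "0 < \<psi> x"
  shows "\<psi> x < \<psi> y"
proof -
  have "0 < \<psi> x / h x"
    using pos h(2)[OF xy(1)] by simp
  also have "\<psi> x / h x \<le> \<psi> y / h y"
    using ratio xy by simp
  finally have pos_y: "0 < \<psi> y / h y" .
  have "\<psi> x = \<psi> x / h x * h x"
    using h(2)[OF xy(1)] by simp
  also have "\<dots> \<le> \<psi> y / h y * h x"
    using ratio[of x y] xy h(2)[OF xy(1)] by (intro mult_right_mono) auto
  also have "\<dots> < \<psi> y / h y * h y"
    using pos_y h(1)[OF xy(1,2)] by (intro mult_strict_left_mono) auto
  also have "\<dots> = \<psi> y"
    using h(2)[of y] xy by simp
  finally show ?thesis .
qed

lemma mono_of_ratio_mono: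
  fixes \<psi> h :: "real \<Rightarrow> real"
  assumes ratio: "\<And>x y. 0 < x \<Longrightarrow> x \<le> y \<Longrightarrow> y \<le> 1 \<Longrightarrow> \<psi> x / h x \<le> \<psi> y / h y"
    and h: "\<And>x y. 0 < x \<Longrightarrow> x < y \<Longrightarrow> h x < h y" "\<And>x. 0 < x \<Longrightarrow> 0 < h x"
    and nonneg: "\<And>x. 0 \<le> x \<Longrightarrow> x \<le> 1 \<Longrightarrow> 0 \<le> \<psi> x" and psi0: "\<psi> 0 = 0"
    and xy: "0 \<le> x" "x \<le> y" "y \<le> 1"
  shows "\<psi> x \<le> \<psi> y"
proof (cases "0 < x \<and> x < y \<and> 0 < \<psi> x")
  case True
  then show ?thesis
    using strict_mono_where_pos_of_ratio_mono[OF ratio h] xy by fastforce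
next
  case False
  then have "x = 0 \<or> x = y \<or> \<psi> x \<le> 0"
    using xy by linarith
  then show ?thesis
    using nonneg[of y] psi0 xy by auto
qed

lemma psi_inv_props:
  fixes \<psi> :: "real \<Rightarrow> real"
  assumes cont: "continuous_on {0..1} \<psi>" and psi0: "\<psi> 0 = 0" and \<delta>: "0 < \<delta>" "\<delta> \<le> \<psi> 1"
    and strict: "\<And>x y. 0 < x \<Longrightarrow> x < y \<Longrightarrow> y \<le> 1 \<Longrightarrow> 0 < \<psi> x \<Longrightarrow> \<psi> x < \<psi> y"
  shows "0 < psi_inv \<psi> \<delta>" "psi_inv \<psi> \<delta> \<le> 1" "\<psi> (psi_inv \<psi> \<delta>) = \<delta>"
proof -
  obtain x where x: "0 \<le> x" "x \<le> 1" "\<psi> x = \<delta>"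
    using IVT'[of \<psi> 0 \<delta> 1] cont psi0 \<delta> by auto
  have not_less: "\<not> a < b" if "0 \<le> a" "b \<le> 1" "\<psi> a = \<delta>" "\<psi> b = \<delta>" for a b
  proof
    assume "a < b"
    moreover have "a \<noteq> 0"
      using that psi0 \<delta> by auto
    ultimately show False
      using strict[of a b] that \<delta> by simp
  qed
  have unique: "x' = x" if "x' \<in> {0..1}" "\<psi> x' = \<delta>" for x'
    using not_less[of x x'] not_less[of x' x] x that by auto
  have "psi_inv \<psi> \<delta> = x"
    unfolding psi_inv_def by (rule the_equality) (use x in simp, use unique in blast)
  moreover have "x \<noteq> 0"
    using x psi0 \<delta> by auto
  ultimately show "0 < psi_inv \<psi> \<delta>" "psi_inv \<psi> \<delta> \<le> 1" "\<psi> (psi_inv \<psi> \<delta>) = \<delta>"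
    using x by auto
qed

lemma halving_power:
  fixes \<psi> :: "real \<Rightarrow> real"
  assumes K: "K > 1" and halving: "\<forall>x\<in>{0<..1/K}. \<psi> (K * x) / (K * x) \<le> 1/2 * (\<psi> x / x)"
    and y: "0 < y" "K ^ k * y \<le> 1"
  shows "\<psi> (K ^ k * y) / (K ^ k * y) \<le> \<psi> y / y / 2 ^ k"
  using y(2)
proof (induction k)
  case (Suc k)
  have le: "K ^ k * y \<le> K ^ Suc k * y"
    using K y by (simp add: mult_right_mono)
  have "K * (K ^ k * y) \<le> 1"
    using Suc.prems by (simp add: mult.assoc)
  then have "K ^ k * y \<in> {0<..1/K}"
    using K y by (simp add: field_simps)
  then have "\<psi> (K ^ Suc k * y) / (K ^ Suc k * y) \<le> 1/2 * (\<psi> (K ^ k * y) / (K ^ k * y))"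
    using halving by (simp add: mult.assoc)
  also have "\<dots> \<le> 1/2 * (\<psi> y / y / 2 ^ k)"
    using Suc.IH Suc.prems le by (intro mult_left_mono) auto
  finally show ?case
    by simp
qed simp

lemma psi_ge_min:
  fixes \<psi> :: "real \<Rightarrow> real"
  assumes ratio: "\<And>x y. 0 < x \<Longrightarrow> x \<le> y \<Longrightarrow> y \<le> 1 \<Longrightarrow> \<psi> y / y \<le> \<psi> x / x"
    and sqrt_ratio: "\<And>x y. 0 < x \<Longrightarrow> x \<le> y \<Longrightarrow> y \<le> 1 \<Longrightarrow> \<psi> x / sqrt x \<le> \<psi> y / sqrt y"
    and z: "0 < z" "z \<le> 1" and s: "0 < s" "s \<le> 1"
  shows "\<psi> z / z * min s (sqrt (z * s)) \<le> \<psi> s"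
proof (cases "s \<le> z")
  case True
  have "s = sqrt (s * s)"
    using s by simp
  also have "\<dots> \<le> sqrt (z * s)"
    using True s by (intro real_sqrt_le_mono mult_right_mono) auto
  finally have "min s (sqrt (z * s)) = s"
    by simp
  then show ?thesis
    using ratio[OF s(1) True z(2)] s by (simp add: field_simps)
next
  case False
  have "sqrt (z * s) \<le> sqrt (s * s)"
    using False s by (intro real_sqrt_le_mono mult_right_mono) auto
  then have "min s (sqrt (z * s)) = sqrt z * sqrt s"
    using s by (simp add: real_sqrt_mult)
  then have "\<psi> z / z * min s (sqrt (z * s)) = \<psi> z / sqrt z * sqrt s"
    using z by (simp add: field_simps flip: real_sqrt_mult) (simp add: real_sqrt_mult)
  also have "\<dots> \<le> \<psi> s / sqrt s * sqrt s"
    using sqrt_ratio[OF z(1) _ s(2)] False s by (intro mult_right_mono) auto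
  also have "\<dots> = \<psi> s"
    using s by simp
  finally show ?thesis .
qed

locale profile =
  fixes \<psi> :: "real \<Rightarrow> real"
  assumes cont: "continuous_on {0..1} \<psi>"
    and nonneg: "\<forall>x\<in>{0..1}. 0 \<le> \<psi> x"
    and psi0: "\<psi> 0 = 0"
    and psi1: "0 < \<psi> 1"
begin

lemma psi_nonneg: "0 \<le> x \<Longrightarrow> x \<le> 1 \<Longrightarrow> 0 \<le> \<psi> x"
  using nonneg by simp

lemma continuous_on_ratio: "continuous_on {0<..1} (\<lambda>x. \<psi> x / x)"
  by (rule continuous_on_quotient_right[OF cont]) (auto intro: continuous_intros)

lemma continuous_on_sqrt_ratio: "continuous_on {0<..1} (\<lambda>x. \<psi> x / sqrt x)"
  by (rule continuous_on_quotient_right[OF cont]) (auto intro: continuous_intros)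

end

section \<open>The model domain \<open>\<psi>(x) = x\<close>\<close>

lemma sqrt_mult_le_half_add: "0 \<le> d \<Longrightarrow> sqrt d * v \<le> (d + v\<^sup>2) / 2"
  using zero_le_power2[of "sqrt d - v"] by (simp add: power2_diff)

lemma id_pdelta_disc:
  assumes \<delta>: "0 < \<delta>" "\<delta> \<le> \<delta>0" "\<delta>0 < 1"
    and r: "0 < r" "r * max ((norm xN - norm xT) / sqrt \<delta>) (norm xT) \<le> (1 - \<delta>0) / 6"
  shows "\<exists>\<phi>. pdelta_disc (\<lambda>x. x) \<delta> (xN, xT) r \<phi>"
proof -
  have sd: "0 < sqrt \<delta>" "sqrt \<delta> \<le> 1"
    using \<delta> by auto
  have "r * ((norm xN - norm xT) / sqrt \<delta>) \<le> (1 - \<delta>0) / 6" and rm: "r * norm xT \<le> (1 - \<delta>0) / 6"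
    using r order.trans[OF mult_left_mono[OF max.cobounded1] r(2)]
      order.trans[OF mult_left_mono[OF max.cobounded2] r(2)] by auto
  then have "r * ((norm xN - norm xT) / sqrt \<delta>) * sqrt \<delta> \<le> (1 - \<delta>0) / 6 * sqrt \<delta>"
    using sd by (intro mult_right_mono) auto
  then have rnm: "r * (norm xN - norm xT) \<le> sqrt \<delta> * ((1 - \<delta>0) / 6)"
    using sd by (simp add: mult.commute)
  moreover have "sqrt \<delta> * ((1 - \<delta>0) / 6) \<le> (1 - \<delta>0) / 6"
    using sd \<delta> by (simp add: mult_left_le_one_le)
  ultimately have rn: "r * norm xN \<le> (1 - \<delta>0) / 3"
    using rm by (simp add: right_diff_distrib)
  show ?thesis
  proof (rule quadratic_pdelta_disc[where s = "1 / 2"])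
    fix v :: real assume v: "0 < v" "v < 1"
    have "sqrt \<delta> * ((1 - \<delta>0) / 6) \<le> sqrt \<delta>"
      using sd \<delta> by (intro mult_left_le) auto
    then have "r * (norm xN - norm xT) * v \<le> sqrt \<delta> * v"
      using rnm v by (intro mult_right_mono) auto
    also have "\<dots> \<le> (\<delta> + v\<^sup>2) / 2"
      using \<delta> by (intro sqrt_mult_le_half_add) simp
    finally show "r * norm xN * v - \<delta> < v * (r * norm xT + 1 / 2 * v)"
      using \<delta> by (simp add: algebra_simps power2_eq_square)
  qed (use \<delta> r rm rn in auto)
qed

lemma kobayashi_id_le:
  assumes \<delta>: "0 < \<delta>" "\<delta> \<le> \<delta>0" "\<delta>0 < 1"
  shows "kobayashi (Gpsi (\<lambda>x. x)) (pdelta \<delta>) (xN, xT)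
    \<le> 6 / (1 - \<delta>0) * max ((norm xN - norm xT) / sqrt \<delta>) (norm xT)"
proof -
  define E where "E = max ((norm xN - norm xT) / sqrt \<delta>) (norm xT)"
  show ?thesis
  proof (cases "E = 0")
    case True
    have "norm xT \<le> E" "(norm xN - norm xT) / sqrt \<delta> \<le> E"
      by (simp_all add: E_def)
    then have "xT = 0" "xN = 0"
      using True \<delta> by (simp_all add: divide_le_0_iff)
    then show ?thesis
      using kobayashi_zero_vector[of \<delta> "\<lambda>x. x"] \<delta> by (simp add: E_def)
  next
    case False
    then have E: "0 < E"
      using norm_ge_zero[of xT] by (auto simp: E_def less_max_iff_disj)
    define r where "r = (1 - \<delta>0) / (6 * E)"
    have "0 < r" "r * E \<le> (1 - \<delta>0) / 6"
      using E \<delta> by (simp_all add: r_def)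
    then obtain \<phi> where "pdelta_disc (\<lambda>x. x) \<delta> (xN, xT) r \<phi>"
      using id_pdelta_disc[OF \<delta>] unfolding E_def by blast
    then have "kobayashi (Gpsi (\<lambda>x. x)) (pdelta \<delta>) (xN, xT) \<le> 1 / r"
      by (rule kobayashi_le_inverse)
    also have "1 / r = 6 / (1 - \<delta>0) * E"
      using E \<delta> by (simp add: r_def)
    finally show ?thesis
      by (simp add: E_def)
  qed
qed

text \<open>A disc with \<open>\<phi>'(0) = r X\<close> satisfies \<open>r |x\<^sub>T| \<le> 1\<close> by Schwarz's lemma, and
  \<open>r (|x\<^sub>N| - |x\<^sub>T|) < 6 \<surd>\<delta>\<close> by comparing \<open>\<phi>\<close> with its linear part at \<open>|w| = \<surd>\<delta>\<close>.\<close>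
lemma kobayashi_id_ge:
  assumes \<delta>: "0 < \<delta>" "\<delta> < 1"
  shows "1 / 6 * max ((norm xN - norm xT) / sqrt \<delta>) (norm xT)
    \<le> kobayashi (Gpsi (\<lambda>x. x)) (pdelta \<delta>) (xN, xT)"
proof (rule kobayashi_greatest)
  show "\<exists>r \<phi>. pdelta_disc (\<lambda>x. x) \<delta> (xN, xT) r \<phi>"
    using \<delta> by (intro pdelta_disc_exists) auto
  fix r \<phi> assume disc: "pdelta_disc (\<lambda>x. x) \<delta> (xN, xT) r \<phi>"
  have sd: "0 < sqrt \<delta>" "sqrt \<delta> < 1"
    using \<delta> by auto
  have r: "0 < r"
    using pdelta_discD(1)[OF disc] .
  have "r * norm xN * sqrt \<delta> - \<delta> - 4 * (sqrt \<delta>)\<^sup>2 < sqrt \<delta> * (sqrt \<delta> + r * norm xT)"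
    by (rule pdelta_disc_normal_le_id[OF disc sd])
  then have "r * (norm xN - norm xT) * sqrt \<delta> < 6 * \<delta>"
    using \<delta> by (simp add: algebra_simps)
  also have "6 * \<delta> = (6 * sqrt \<delta>) * sqrt \<delta>"
    using \<delta> by (simp add: mult.assoc)
  finally have "r * (norm xN - norm xT) < 6 * sqrt \<delta>"
    using sd by (simp add: mult_less_cancel_right_pos)
  then have "r * ((norm xN - norm xT) / sqrt \<delta>) < 6"
    using sd by (simp add: pos_divide_less_eq)
  moreover have "r * norm xT \<le> 1"
    by (rule pdelta_disc_tangent_le[OF disc])
  ultimately have "r * max ((norm xN - norm xT) / sqrt \<delta>) (norm xT) \<le> 6"
    by (simp add: max_def)
  then show "1 / 6 * max ((norm xN - norm xT) / sqrt \<delta>) (norm xT) \<le> 1 / r"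
    using r by (simp add: le_divide_eq mult.commute)
qed

lemma kobayashi_estimate_id:
  fixes \<delta>0 :: real
  assumes "0 < \<delta>0" "\<delta>0 < 1"
  shows "\<exists>c C. 0 < c \<and> c < C \<and>
       (\<forall>\<delta> xN xT. 0 < \<delta> \<and> \<delta> \<le> \<delta>0 \<longrightarrow>
          c * max ((norm xN - norm xT) / sqrt \<delta>) (norm xT) \<le> kobayashi (Gpsi (\<lambda>x. x)) (pdelta \<delta>) (xN, xT)
          \<and> kobayashi (Gpsi (\<lambda>x. x)) (pdelta \<delta>) (xN, xT) \<le> C * max ((norm xN - norm xT) / sqrt \<delta>) (norm xT))"
proof (intro exI conjI allI impI)
  show "1 / 6 < 6 / (1 - \<delta>0)"
    using assms by (simp add: field_simps)
qed (use assms kobayashi_id_le kobayashi_id_ge in auto)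

lemma half_le_sqrt_half_square:
  assumes "0 \<le> v"
  shows "v / 2 \<le> sqrt (v * v / 2)"
proof -
  have "v / 2 = sqrt ((v / 2)\<^sup>2)"
    using assms by simp
  also have "\<dots> \<le> sqrt (v * v / 2)"
    using mult_nonneg_nonneg[OF assms assms] by (intro real_sqrt_le_mono) (simp add: power2_eq_square)
  finally show ?thesis .
qed

text \<open>In the condition on \<open>v\<close>, the left-hand side is negative for \<open>v < 2 \<surd>x\<close>; for larger
  \<open>v\<close> the growth of \<open>\<psi>\<close> above \<open>x\<close> takes over.\<close>
lemma normal_pdelta_disc:
  fixes \<psi> :: "real \<Rightarrow> real"
  assumes nonneg: "\<And>x. 0 \<le> x \<Longrightarrow> x \<le> 1 \<Longrightarrow> 0 \<le> \<psi> x"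
    and mono: "\<And>x y. 0 \<le> x \<Longrightarrow> x \<le> y \<Longrightarrow> y \<le> 1 \<Longrightarrow> \<psi> x \<le> \<psi> y"
    and \<delta>: "0 < \<delta>" and x: "0 < x"
    and growth: "\<And>s. x \<le> s \<Longrightarrow> s \<le> 1 \<Longrightarrow> \<delta> * sqrt (s / x) \<le> \<psi> s"
    and c: "0 < c" "c \<le> 1 / 2"
    and r: "0 < r" "r * norm xN \<le> c * \<delta> / sqrt x" "r * norm xT \<le> 1 / 2" "\<delta> + r * norm xN < 1"
  shows "\<exists>\<phi>. pdelta_disc \<psi> \<delta> (xN, xT) r \<phi>"
proof (rule quadratic_pdelta_disc[OF nonneg mono \<delta> r(1), where s = "1 / 2"])
  fix v :: real assume v: "0 < v" "v < 1"
  define X where "X = v * (r * norm xT + 1 / 2 * v)"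
  have X: "v * v / 2 \<le> X" "0 \<le> X"
    using v r unfolding X_def by (auto simp: algebra_simps)
  have "X \<le> 1"
    using v r unfolding X_def by (intro mult_le_one) auto
  note X = X this
  have rnv: "r * norm xN * v \<le> c * \<delta> / sqrt x * v"
    using r(2) v by (intro mult_right_mono) auto
  have "r * norm xN * v - \<delta> < \<psi> X"
  proof (cases "v < 2 * sqrt x")
    case True
    then have "c * \<delta> / sqrt x * v < c * \<delta> / sqrt x * (2 * sqrt x)"
      using c \<delta> x by (intro mult_strict_left_mono) auto
    also have "\<dots> \<le> \<delta>"
      using c \<delta> x by simp
    finally show ?thesis
      using rnv nonneg[OF X(2,3)] by linarith
  next
    case False
    then have "(2 * sqrt x) * (2 * sqrt x) \<le> v * v"
      using x v by (intro mult_mono) auto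
    then have xv: "x \<le> v * v / 2"
      using x by simp
    have "c * \<delta> / sqrt x * v \<le> \<delta> * ((v / 2) / sqrt x)"
      using c \<delta> x v by (simp add: field_simps mult_right_mono)
    also have "\<dots> \<le> \<delta> * (sqrt (v * v / 2) / sqrt x)"
      using \<delta> x v half_le_sqrt_half_square[of v] by (intro mult_left_mono divide_right_mono) auto
    also have "\<dots> = \<delta> * sqrt (v * v / 2 / x)"
      by (simp only: real_sqrt_divide)
    also have "\<dots> \<le> \<psi> (v * v / 2)"
      using X by (intro growth[OF xv]) linarith
    also have "\<dots> \<le> \<psi> X"
      using mono X by simp
    finally show ?thesis
      using rnv \<delta> by linarith
  qed
  then show "r * norm xN * v - \<delta> < \<psi> (v * (r * norm xT + 1 / 2 * v))"
    by (simp add: X_def)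
qed (use r in auto)

lemma kobayashi_le_normal:
  fixes \<psi> :: "real \<Rightarrow> real"
  assumes nonneg: "\<And>x. 0 \<le> x \<Longrightarrow> x \<le> 1 \<Longrightarrow> 0 \<le> \<psi> x"
    and mono: "\<And>x y. 0 \<le> x \<Longrightarrow> x \<le> y \<Longrightarrow> y \<le> 1 \<Longrightarrow> \<psi> x \<le> \<psi> y"
    and \<delta>: "0 < \<delta>" and x: "0 < x" "x \<le> 1"
    and growth: "\<And>s. x \<le> s \<Longrightarrow> s \<le> 1 \<Longrightarrow> \<delta> * sqrt (s / x) \<le> \<psi> s"
    and c: "0 < c" "c \<le> 1 / 2" "\<delta> + c * \<psi> 1 < 1"
    and xN: "xN \<noteq> 0" and tangent: "2 * c * \<delta> * norm xT \<le> sqrt x * norm xN"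
  shows "kobayashi (Gpsi \<psi>) (pdelta \<delta>) (xN, xT) \<le> 1 / c * (sqrt x / \<delta>) * norm xN"
proof -
  define r where "r = c * \<delta> / (sqrt x * norm xN)"
  have r: "0 < r" "r * norm xN = c * \<delta> / sqrt x"
    using c \<delta> x xN by (simp_all add: r_def)
  have "r * norm xT \<le> 1 / 2"
    using tangent c \<delta> x xN by (simp add: r_def field_simps)
  moreover have "\<delta> / sqrt x \<le> \<psi> 1"
    using growth[OF x(2)] x by (simp add: real_sqrt_divide)
  then have "\<delta> + r * norm xN < 1"
    using c mult_left_mono[of "\<delta> / sqrt x" "\<psi> 1" c] r(2) by simp
  ultimately have "\<exists>\<phi>. pdelta_disc \<psi> \<delta> (xN, xT) r \<phi>"
    using r(2) by (intro normal_pdelta_disc[OF nonneg mono \<delta> x(1) growth c(1,2) r(1)]) auto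
  then obtain \<phi> where "pdelta_disc \<psi> \<delta> (xN, xT) r \<phi>"
    by blast
  then have "kobayashi (Gpsi \<psi>) (pdelta \<delta>) (xN, xT) \<le> 1 / r"
    by (rule kobayashi_le_inverse)
  then show ?thesis
    using c \<delta> x xN by (simp add: r_def field_simps)
qed

section \<open>Part (3): \<open>\<psi>(x)/x\<close> nondecreasing\<close>

locale increasing_ratio_profile = profile +
  assumes ratio_mono: "mono_on {0<..<1} (\<lambda>x. \<psi> x / x)"
begin

lemma ratio_mono_le: "0 < x \<Longrightarrow> x \<le> y \<Longrightarrow> y \<le> 1 \<Longrightarrow> \<psi> x / x \<le> \<psi> y / y"
  by (rule mono_on_le_at_right_end[OF ratio_mono continuous_on_ratio])

lemma strict_mono_where_pos: "0 < x \<Longrightarrow> x < y \<Longrightarrow> y \<le> 1 \<Longrightarrow> 0 < \<psi> x \<Longrightarrow> \<psi> x < \<psi> y"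
  by (rule strict_mono_where_pos_of_ratio_mono[where h = "\<lambda>x. x", OF ratio_mono_le]) auto

lemma mono: "0 \<le> x \<Longrightarrow> x \<le> y \<Longrightarrow> y \<le> 1 \<Longrightarrow> \<psi> x \<le> \<psi> y"
  by (rule mono_of_ratio_mono[where h = "\<lambda>x. x", OF ratio_mono_le _ _ psi_nonneg psi0]) auto

lemma psi_inv_less:
  assumes "0 < \<delta>" "\<delta> < \<psi> 1"
  shows "0 < psi_inv \<psi> \<delta>" "psi_inv \<psi> \<delta> < 1" "\<psi> (psi_inv \<psi> \<delta>) = \<delta>"
proof -
  note inv = psi_inv_props[OF cont psi0 assms(1) less_imp_le[OF assms(2)] strict_mono_where_pos]
  show "0 < psi_inv \<psi> \<delta>" "\<psi> (psi_inv \<psi> \<delta>) = \<delta>"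
    using inv by auto
  show "psi_inv \<psi> \<delta> < 1"
    using inv assms(2) by (cases "psi_inv \<psi> \<delta> = 1") auto
qed

lemma psi_less_level:
  assumes \<delta>: "0 < \<delta>" "\<delta> < \<psi> 1" and Y: "0 < Y" "Y < psi_inv \<psi> \<delta>"
  shows "\<psi> Y < \<delta>"
proof -
  define x where "x = psi_inv \<psi> \<delta>"
  have x: "0 < x" "x < 1" "\<psi> x = \<delta>"
    using psi_inv_less[OF \<delta>] by (simp_all add: x_def)
  have "\<psi> Y \<le> Y * (\<psi> x / x)"
    using ratio_mono_le[of Y x] Y x by (simp add: x_def field_simps)
  also have "\<dots> < x * (\<psi> x / x)"
    using Y x \<delta> by (intro mult_strict_right_mono) (auto simp: x_def)
  finally show ?thesis
    using x by simp
qed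

lemma normal_growth:
  assumes x: "0 < x" and s: "x \<le> s" "s \<le> 1"
  shows "\<psi> x * sqrt (s / x) \<le> \<psi> s"
proof -
  have "1 \<le> s / x"
    using s x by simp
  then have "sqrt (s / x) \<le> s / x"
    using mult_left_mono[of 1 "s / x" "s / x"] by (intro real_le_lsqrt) (auto simp: power2_eq_square)
  moreover have "0 \<le> \<psi> x"
    using x s psi_nonneg by simp
  ultimately have "\<psi> x * sqrt (s / x) \<le> \<psi> x * (s / x)"
    by (rule mult_left_mono)
  also have "\<dots> = \<psi> x / x * s"
    by simp
  also have "\<dots> \<le> \<psi> s"
    using ratio_mono_le[OF x s] s x by (simp add: field_simps)
  finally show ?thesis .
qed

lemma kobayashi_le:
  assumes \<delta>: "0 < \<delta>" "\<delta> < \<psi> 1" and c: "0 < c" "c \<le> 1 / 2" "\<delta> + c * \<psi> 1 < 1"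
    and tangent: "norm xT \<le> psi_inv \<psi> \<delta> / (8 * \<delta>) * norm xN"
  shows "kobayashi (Gpsi \<psi>) (pdelta \<delta>) (xN, xT) \<le> 1 / c * (sqrt (psi_inv \<psi> \<delta>) / \<delta>) * norm xN"
proof (cases "xN = 0")
  case True
  then have "xT = 0"
    using tangent by simp
  moreover have "\<delta> < 1"
    using c psi1 mult_pos_pos[of c "\<psi> 1"] by linarith
  ultimately show ?thesis
    using True kobayashi_zero_vector[of \<delta> \<psi>] \<delta> psi0 by simp
next
  case False
  define x where "x = psi_inv \<psi> \<delta>"
  have x: "0 < x" "x < 1" "\<psi> x = \<delta>"
    using psi_inv_less[OF \<delta>] by (simp_all add: x_def)
  have growth: "\<delta> * sqrt (s / x) \<le> \<psi> s" if "x \<le> s" "s \<le> 1" for s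
    using normal_growth[OF x(1) that] x by (simp add: mult.commute)
  have "2 * c * \<delta> * norm xT \<le> 2 * c * \<delta> * (x / (8 * \<delta>) * norm xN)"
    using tangent c \<delta> by (intro mult_left_mono) (auto simp: x_def)
  also have "\<dots> = c / 4 * x * norm xN"
    using \<delta> by simp
  also have "\<dots> \<le> sqrt x * norm xN"
  proof (intro mult_right_mono)
    have "x\<^sup>2 \<le> x"
      using x by (simp add: power2_eq_square mult_left_le)
    then have "x \<le> sqrt x"
      by (rule real_le_rsqrt)
    then show "c / 4 * x \<le> sqrt x"
      using c x mult_left_le_one_le[of x "c / 4"] by linarith
  qed simp
  finally show ?thesis
    using kobayashi_le_normal[OF psi_nonneg mono \<delta>(1) x(1) _ growth c False] x by (simp add: x_def)
qed

text \<open>Take \<open>\<rho> = 4 \<delta> / (r |x\<^sub>N|)\<close> in the normal estimate: if \<open>r |x\<^sub>N| \<surd>x\<close> were larger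
  than \<open>4 \<surd>2 \<delta>\<close>, the second coordinate would stay below \<open>x = \<psi>\<^sup>-\<^sup>1(\<delta>)\<close> on
  \<open>|w| < \<rho>\<close>, forcing \<open>r |x\<^sub>N| < 4 \<delta> / \<rho>\<close>.\<close>
lemma pdelta_disc_normal_le_psi_inv:
  assumes disc: "pdelta_disc \<psi> \<delta> (xN, xT) r \<phi>" and \<delta>: "0 < \<delta>" "\<delta> < \<psi> 1"
    and tangent: "norm xT \<le> psi_inv \<psi> \<delta> / (8 * \<delta>) * norm xN"
  shows "r * norm xN * sqrt (psi_inv \<psi> \<delta>) \<le> 4 * sqrt 2 * \<delta>"
proof (rule ccontr)
  define x where "x = psi_inv \<psi> \<delta>"
  have x: "0 < x" "x < 1" "\<psi> x = \<delta>"
    using psi_inv_less[OF \<delta>] by (simp_all add: x_def)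
  define R where "R = r * norm xN"
  assume "\<not> r * norm xN * sqrt (psi_inv \<psi> \<delta>) \<le> 4 * sqrt 2 * \<delta>"
  then have big: "4 * sqrt 2 * \<delta> < R * sqrt x"
    by (simp add: R_def x_def)
  moreover have "0 < 4 * sqrt 2 * \<delta>"
    using \<delta> by simp
  ultimately have "0 < R * sqrt x"
    by linarith
  then have R: "0 < R"
    using x by (simp add: zero_less_mult_iff)
  have "(4 * sqrt 2 * \<delta>)\<^sup>2 < (R * sqrt x)\<^sup>2"
    using big \<delta> by (intro power_strict_mono) auto
  then have big2: "32 * \<delta>\<^sup>2 < R\<^sup>2 * x"
    using x by (simp add: power_mult_distrib)
  define \<rho> where "\<rho> = 4 * \<delta> / R"
  have \<rho>: "0 < \<rho>" "\<rho>\<^sup>2 < x / 2"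
    using R \<delta> big2 by (simp_all add: \<rho>_def power_divide field_simps)
  then have \<rho>1: "\<rho> < 1"
    using power_less_imp_less_base[of \<rho> 2 1] x by simp
  have "r * norm xT \<le> r * (x / (8 * \<delta>) * norm xN)"
    using tangent pdelta_discD(1)[OF disc] by (intro mult_left_mono) (auto simp: x_def)
  also have "\<dots> = R * x / (8 * \<delta>)"
    by (simp add: R_def)
  finally have "\<rho> * (r * norm xT) \<le> \<rho> * (R * x / (8 * \<delta>))"
    using \<rho> by (intro mult_left_mono) auto
  also have "\<dots> = x / 2"
    using R \<delta> by (simp add: \<rho>_def)
  finally have Y: "\<rho> * (\<rho> + r * norm xT) < x"
    using \<rho> by (simp add: algebra_simps power2_eq_square)
  have Y0: "0 < \<rho> * (\<rho> + r * norm xT)"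
    using \<rho> pdelta_discD(1)[OF disc] by (simp add: add_pos_nonneg)
  have "R \<le> 2 * (\<psi> (\<rho> * (\<rho> + r * norm xT)) + \<delta>) / \<rho>"
    unfolding R_def using pdelta_disc_normal_le[OF disc mono \<rho>(1) \<rho>1] Y x by simp
  also have "\<dots> < 2 * (\<delta> + \<delta>) / \<rho>"
    using psi_less_level[OF \<delta> Y0] Y \<rho> by (intro divide_strict_right_mono) (auto simp: x_def)
  finally have "R < 2 * (\<delta> + \<delta>) / \<rho>" .
  then show False
    using R \<delta> by (simp add: \<rho>_def)
qed

lemma kobayashi_ge:
  assumes \<delta>: "0 < \<delta>" "\<delta> < \<psi> 1" "\<delta> < 1"
    and tangent: "norm xT \<le> psi_inv \<psi> \<delta> / (8 * \<delta>) * norm xN"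
  shows "1 / (4 * sqrt 2) * (sqrt (psi_inv \<psi> \<delta>) / \<delta>) * norm xN \<le> kobayashi (Gpsi \<psi>) (pdelta \<delta>) (xN, xT)"
proof (rule kobayashi_greatest)
  show "\<exists>r \<phi>. pdelta_disc \<psi> \<delta> (xN, xT) r \<phi>"
    using \<delta> by (intro pdelta_disc_exists psi_nonneg mono) auto
  fix r \<phi> assume disc: "pdelta_disc \<psi> \<delta> (xN, xT) r \<phi>"
  then show "1 / (4 * sqrt 2) * (sqrt (psi_inv \<psi> \<delta>) / \<delta>) * norm xN \<le> 1 / r"
    using pdelta_disc_normal_le_psi_inv[OF disc \<delta>(1,2) tangent] pdelta_discD(1)[OF disc] \<delta>
    by (simp add: field_simps)
qed

lemma kobayashi_estimate:
  fixes \<delta>0 :: real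
  assumes \<delta>0: "0 < \<delta>0" "\<delta>0 < 1"
  shows "\<exists>C>0. \<forall>\<delta> xN xT. 0 < \<delta> \<and> \<delta> < \<psi> 1 \<and> \<delta> \<le> \<delta>0 \<and>
            norm xT \<le> psi_inv \<psi> \<delta> / (8 * \<delta>) * norm xN
          \<longrightarrow> 1 / (4 * sqrt 2) * (sqrt (psi_inv \<psi> \<delta>) / \<delta>) * norm xN \<le> kobayashi (Gpsi \<psi>) (pdelta \<delta>) (xN, xT)
            \<and> kobayashi (Gpsi \<psi>) (pdelta \<delta>) (xN, xT) \<le> C * (sqrt (psi_inv \<psi> \<delta>) / \<delta>) * norm xN"
proof -
  define c where "c = min (1 / 2) ((1 - \<delta>0) / (2 * \<psi> 1))"
  have c: "0 < c" "c \<le> 1 / 2" "c * \<psi> 1 < 1 - \<delta>0"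
    using \<delta>0 psi1 by (auto simp: c_def min_def field_simps)
  show ?thesis
    using c \<delta>0 kobayashi_ge kobayashi_le[OF _ _ c(1,2)] by (intro exI[of _ "1 / c"]) auto
qed

end

lemma kobayashi_estimate_increasing_ratio:
  fixes \<psi> :: "real \<Rightarrow> real" and \<delta>0 :: real
  assumes "continuous_on {0..1} \<psi>" "\<forall>x\<in>{0..1}. \<psi> x \<ge> 0" "\<psi> 0 = 0" "\<psi> 1 > 0"
    and \<delta>0: "0 < \<delta>0" "\<delta>0 < 1"
  shows "mono_on {0<..<1} (\<lambda>x. \<psi> x / x)
     \<longrightarrow> (\<exists>C>0. \<forall>\<delta> xN xT. 0 < \<delta> \<and> \<delta> < \<psi> 1 \<and> \<delta> \<le> \<delta>0 \<and>
            norm xT \<le> psi_inv \<psi> \<delta> / (8 * \<delta>) * norm xN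
          \<longrightarrow> 1 / (4 * sqrt 2) * (sqrt (psi_inv \<psi> \<delta>) / \<delta>) * norm xN \<le> kobayashi (Gpsi \<psi>) (pdelta \<delta>) (xN, xT)
            \<and> kobayashi (Gpsi \<psi>) (pdelta \<delta>) (xN, xT) \<le> C * (sqrt (psi_inv \<psi> \<delta>) / \<delta>) * norm xN)"
  using increasing_ratio_profile.kobayashi_estimate[OF _ \<delta>0] assms
  unfolding increasing_ratio_profile_def increasing_ratio_profile_axioms_def profile_def by blast

section \<open>Part (1): the halving property\<close>

lemma tangent_pdelta_disc:
  fixes \<psi> :: "real \<Rightarrow> real"
  assumes nonneg: "\<And>x. 0 \<le> x \<Longrightarrow> x \<le> 1 \<Longrightarrow> 0 \<le> \<psi> x"
    and mono: "\<And>x y. 0 \<le> x \<Longrightarrow> x \<le> y \<Longrightarrow> y \<le> 1 \<Longrightarrow> \<psi> x \<le> \<psi> y"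
    and \<delta>: "0 < \<delta>" and t: "0 < t"
    and growth: "\<And>s. 0 < s \<Longrightarrow> s \<le> 1 \<Longrightarrow> min s (b * sqrt s) \<le> t * \<psi> s"
    and r: "0 < r" "t * (r * norm xN) \<le> r * norm xT" "r * norm xT \<le> b / 2" "r * norm xT \<le> 1 / 2"
      "\<delta> + r * norm xN < 1"
  shows "\<exists>\<phi>. pdelta_disc \<psi> \<delta> (xN, xT) r \<phi>"
proof (rule quadratic_pdelta_disc[OF nonneg mono \<delta> r(1), where s = "1 / 2"])
  fix v :: real assume v: "0 < v" "v < 1"
  define a where "a = r * norm xT"
  define X where "X = v * (a + 1 / 2 * v)"
  have a: "0 \<le> a" "a \<le> b / 2" "a \<le> 1 / 2"
    using r by (simp_all add: a_def)
  have X: "v * a \<le> X" "v * v / 2 \<le> X" "0 < X"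
    using v a unfolding X_def by (auto simp: algebra_simps add_nonneg_pos)
  have "X \<le> 1"
    using v a unfolding X_def by (intro mult_le_one) auto
  have "v * a \<le> b * (v / 2)"
    using v a by (simp add: mult_left_mono)
  also have "\<dots> \<le> b * sqrt X"
  proof (rule mult_left_mono)
    show "v / 2 \<le> sqrt X"
      using half_le_sqrt_half_square[of v] real_sqrt_le_mono[OF X(2)] v by linarith
  qed (use a in auto)
  finally have "v * a \<le> min X (b * sqrt X)"
    using X by simp
  also have "\<dots> \<le> t * \<psi> X"
    using growth X \<open>X \<le> 1\<close> by simp
  finally have va: "v * a \<le> t * \<psi> X" .
  have "t * (r * norm xN * v) = t * (r * norm xN) * v"
    by (simp only: mult.assoc)
  also have "\<dots> \<le> a * v"
    using r(2) v by (intro mult_right_mono) (auto simp: a_def)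
  also have "\<dots> \<le> t * \<psi> X"
    using va by (simp add: mult.commute)
  finally have "t * (r * norm xN * v) \<le> t * \<psi> X" .
  then have "r * norm xN * v \<le> \<psi> X"
    using t by simp
  then show "r * norm xN * v - \<delta> < \<psi> (v * (r * norm xT + 1 / 2 * v))"
    using \<delta> by (simp add: X_def a_def)
qed (use r in auto)

lemma pdelta_disc_normal_le_sqrt:
  assumes disc: "pdelta_disc \<psi> \<delta> (xN, xT) r \<phi>"
    and mono: "\<And>x y. 0 \<le> x \<Longrightarrow> x \<le> y \<Longrightarrow> y \<le> 1 \<Longrightarrow> \<psi> x \<le> \<psi> y"
    and x: "0 < x" "x \<le> 1" "\<psi> x = \<delta>" and tangent: "r * norm xT \<le> sqrt x / 2"
  shows "r * norm xN \<le> 8 * \<delta> / sqrt x"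
proof -
  define \<rho> where "\<rho> = sqrt x / 2"
  have "sqrt x \<le> 1"
    using x by simp
  then have \<rho>: "0 < \<rho>" "\<rho> < 1"
    unfolding \<rho>_def using x by (simp, linarith)
  have "\<rho> * (\<rho> + r * norm xT) \<le> \<rho> * (2 * \<rho>)"
    using tangent \<rho> by (intro mult_left_mono) (auto simp: \<rho>_def)
  also have "\<dots> \<le> x"
    using x by (simp add: \<rho>_def)
  finally have Y: "\<rho> * (\<rho> + r * norm xT) \<le> x" .
  have "0 \<le> \<rho> * (\<rho> + r * norm xT)"
    using \<rho> pdelta_discD(1)[OF disc] by simp
  then have "\<psi> (\<rho> * (\<rho> + r * norm xT)) \<le> \<delta>"
    using mono Y x by (metis order.refl)
  then have "2 * (\<psi> (\<rho> * (\<rho> + r * norm xT)) + \<delta>) / \<rho> \<le> 2 * (\<delta> + \<delta>) / \<rho>"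
    using \<rho> by (intro divide_right_mono) auto
  then have "r * norm xN \<le> 2 * (\<delta> + \<delta>) / \<rho>"
    using pdelta_disc_normal_le[OF disc mono \<rho>] Y x by linarith
  then show ?thesis
    by (simp add: \<rho>_def)
qed

locale halving_profile = profile +
  fixes K :: real
  assumes sqrt_ratio_mono: "mono_on {0<..<1} (\<lambda>x. \<psi> x / sqrt x)"
    and ratio_antimono: "antimono_on {0<..<1} (\<lambda>x. \<psi> x / x)"
    and K: "1 < K"
    and halving: "\<forall>x\<in>{0<..1/K}. \<psi> (K * x) / (K * x) \<le> 1/2 * (\<psi> x / x)"
begin

lemma sqrt_ratio_mono_le: "0 < x \<Longrightarrow> x \<le> y \<Longrightarrow> y \<le> 1 \<Longrightarrow> \<psi> x / sqrt x \<le> \<psi> y / sqrt y"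
  by (rule mono_on_le_at_right_end[OF sqrt_ratio_mono continuous_on_sqrt_ratio])

lemma ratio_antimono_le: "0 < x \<Longrightarrow> x \<le> y \<Longrightarrow> y \<le> 1 \<Longrightarrow> \<psi> y / y \<le> \<psi> x / x"
  by (rule antimono_on_le_at_right_end[OF ratio_antimono continuous_on_ratio])

lemma psi_pos:
  assumes "0 < x" "x \<le> 1"
  shows "0 < \<psi> x"
proof -
  have "0 < \<psi> x / x"
    using ratio_antimono_le[OF assms order.refl] psi1 by simp
  then show ?thesis
    using assms by (simp add: zero_less_divide_iff)
qed

lemma strict_mono_where_pos: "0 < x \<Longrightarrow> x < y \<Longrightarrow> y \<le> 1 \<Longrightarrow> 0 < \<psi> x \<Longrightarrow> \<psi> x < \<psi> y"
  by (rule strict_mono_where_pos_of_ratio_mono[where h = sqrt, OF sqrt_ratio_mono_le]) auto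

lemma mono: "0 \<le> x \<Longrightarrow> x \<le> y \<Longrightarrow> y \<le> 1 \<Longrightarrow> \<psi> x \<le> \<psi> y"
  by (rule mono_of_ratio_mono[where h = sqrt, OF sqrt_ratio_mono_le _ _ psi_nonneg psi0]) auto

lemma psi_inv_le:
  assumes "0 < \<delta>" "\<delta> \<le> \<psi> 1"
  shows "0 < psi_inv \<psi> \<delta>" "psi_inv \<psi> \<delta> \<le> 1" "\<psi> (psi_inv \<psi> \<delta>) = \<delta>"
  using psi_inv_props[OF cont psi0 assms strict_mono_where_pos] by auto

lemma normal_growth:
  assumes "0 < x" "x \<le> s" "s \<le> 1"
  shows "\<psi> x * sqrt (s / x) \<le> \<psi> s"
  using sqrt_ratio_mono_le[OF assms] assms
  by (simp add: real_sqrt_divide field_simps)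

lemma ratio_le_quarter:
  assumes y: "0 < y" and X: "K\<^sup>2 * y \<le> X" "X \<le> 1"
  shows "\<psi> X / X \<le> \<psi> y / y / 4"
proof -
  have "\<psi> X / X \<le> \<psi> (K\<^sup>2 * y) / (K\<^sup>2 * y)"
    using ratio_antimono_le X y K by simp
  also have "\<dots> \<le> \<psi> y / y / 2\<^sup>2"
    using halving_power[OF K halving y, of 2] X by simp
  finally show ?thesis
    by simp
qed

text \<open>Halving three times gives \<open>\<psi>\<^sub>1(y / K\<^sup>3) \<ge> 8 \<psi>\<^sub>1(y)\<close>; below \<open>y / K\<^sup>3\<close> the
  decreasing \<open>\<psi>\<^sub>1\<close>, above it the increasing \<open>\<psi>(s)/\<surd>s\<close> give the bound.\<close>
lemma tangent_growth:
  assumes y: "0 < y" "y \<le> 1" and t: "0 < t" "8 * t * (\<psi> y / y) = 1" and s: "0 < s" "s \<le> 1"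
  shows "min s (sqrt y / K\<^sup>2 * sqrt s) \<le> t * \<psi> s"
proof -
  define z where "z = y / K ^ 3"
  have K3: "1 \<le> K ^ 3" "K ^ 3 \<le> K ^ 4"
    using K by (simp_all add: one_le_power power_increasing)
  have z: "0 < z" "z \<le> 1" "y / K ^ 4 \<le> z"
  proof -
    show "0 < z"
      using y K by (simp add: z_def)
    have "z \<le> y / 1"
      unfolding z_def using K3 y K by (intro divide_left_mono) auto
    then show "z \<le> 1"
      using y by simp
    show "y / K ^ 4 \<le> z"
      unfolding z_def using K3 y K by (intro divide_left_mono) auto
  qed
  have "\<psi> y / y \<le> \<psi> z / z / 2 ^ 3"
    using halving_power[OF K halving z(1), of 3] y K by (simp add: z_def)
  then have "8 * t * (\<psi> y / y) \<le> 8 * t * (\<psi> z / z / 2 ^ 3)"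
    using t by (intro mult_left_mono) auto
  then have tz: "1 \<le> t * (\<psi> z / z)"
    using t by simp
  have "sqrt (K ^ 4) = K\<^sup>2"
    using real_sqrt_abs[of "K\<^sup>2"] by (simp flip: power_mult)
  then have "sqrt y / K\<^sup>2 * sqrt s = sqrt (y / K ^ 4 * s)"
    by (simp add: real_sqrt_mult real_sqrt_divide)
  also have "\<dots> \<le> sqrt (z * s)"
    using z s by (intro real_sqrt_le_mono mult_right_mono) auto
  finally have "min s (sqrt y / K\<^sup>2 * sqrt s) \<le> min s (sqrt (z * s))"
    by simp
  also have "\<dots> \<le> t * (\<psi> z / z) * min s (sqrt (z * s))"
    using mult_right_mono[OF tz, of "min s (sqrt (z * s))"] s z by simp
  also have "\<dots> \<le> t * \<psi> s"
    using mult_left_mono[OF psi_ge_min[OF ratio_antimono_le sqrt_ratio_mono_le z(1,2) s], of t] t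
    by (simp add: mult.assoc)
  finally show ?thesis .
qed

lemma level_le_scaled:
  assumes x: "0 < x" "x \<le> 1" and X: "0 < X" "X \<le> 1" and a: "0 < a" "a \<le> 1" "a * x \<le> X"
  shows "a * \<psi> x \<le> \<psi> X"
proof (cases "x \<le> X")
  case True
  then show ?thesis
    using mono[of x X] psi_nonneg[of x] x X a mult_left_le_one_le[of "\<psi> x" a] by linarith
next
  case False
  have "a * \<psi> x = a * x * (\<psi> x / x)"
    using x by simp
  also have "\<dots> \<le> X * (\<psi> X / X)"
    using a ratio_antimono_le[of X x] False x X psi_nonneg[of x] by (intro mult_mono) auto
  finally show ?thesis
    using X by simp
qed

lemma kobayashi_le_tangent:
  assumes \<delta>: "0 < \<delta>" and c: "0 < c" "c \<le> 1 / (2 * K\<^sup>2)" "\<delta> + 8 * c * \<psi> 1 < 1"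
    and xT: "xT \<noteq> 0" and t: "0 < t" "norm xT = t * norm xN"
    and y: "0 < y" "y \<le> 1" "8 * t * (\<psi> y / y) = 1"
  shows "kobayashi (Gpsi \<psi>) (pdelta \<delta>) (xN, xT) \<le> 1 / (8 * c) * (8 * t / sqrt y) * norm xN"
proof -
  define r where "r = c * sqrt y / norm xT"
  have r: "0 < r" "r * norm xT = c * sqrt y"
    using c y xT by (simp_all add: r_def)
  have rN: "t * (r * norm xN) = r * norm xT"
    using t by simp
  have "r * norm xN = c * sqrt y / t"
    using rN r t by (simp add: field_simps)
  also have "\<dots> = 8 * c * (\<psi> y / sqrt y)"
    using y t by (simp add: field_simps flip: real_sqrt_mult)
  also have "\<dots> \<le> 8 * c * \<psi> 1"
    using sqrt_ratio_mono_le[OF y(1,2) order.refl] c by (intro mult_left_mono) auto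
  finally have "\<delta> + r * norm xN < 1"
    using c by linarith
  moreover have "c * sqrt y \<le> sqrt y / K\<^sup>2 / 2"
    using mult_right_mono[OF c(2), of "sqrt y"] y by simp
  moreover have "c * sqrt y \<le> 1 / 2"
  proof -
    have "1 / (2 * K\<^sup>2) \<le> 1 / 2"
      using K by (simp add: one_le_power)
    moreover have "c * sqrt y \<le> c"
      using c y by (intro mult_left_le) auto
    ultimately show ?thesis
      using c(2) by linarith
  qed
  ultimately have "\<exists>\<phi>. pdelta_disc \<psi> \<delta> (xN, xT) r \<phi>"
    using tangent_growth[OF y(1,2) t(1) y(3)] r rN
    by (intro tangent_pdelta_disc[OF psi_nonneg mono \<delta> t(1), where b = "sqrt y / K\<^sup>2"]) auto
  then obtain \<phi> where "pdelta_disc \<psi> \<delta> (xN, xT) r \<phi>"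
    by blast
  then have "kobayashi (Gpsi \<psi>) (pdelta \<delta>) (xN, xT) \<le> 1 / r"
    by (rule kobayashi_le_inverse)
  also have "\<dots> = 1 / (8 * c) * (8 * t / sqrt y) * norm xN"
    using c y xT t by (simp add: r_def field_simps)
  finally show ?thesis .
qed

text \<open>The normal estimate with \<open>\<rho> = r |x\<^sub>T| / 2\<close>, where \<open>X = \<rho> (\<rho> + r |x\<^sub>T|)\<close> is
  comparable to \<open>\<psi>\<^sup>-\<^sup>1(\<delta>)\<close> and hence \<open>\<delta> \<le> 16/3 \<psi>(X)\<close>.\<close>
lemma pdelta_disc_large_tangent_ratio:
  assumes disc: "pdelta_disc \<psi> \<delta> (xN, xT) r \<phi>" and \<delta>: "0 < \<delta>" "\<delta> \<le> \<psi> 1"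
    and large: "sqrt (psi_inv \<psi> \<delta>) / 2 < r * norm xT"
    and t: "0 < t" "norm xT = t * norm xN"
  defines "X \<equiv> 3 * (r * norm xT)\<^sup>2 / 4"
  shows "0 < X" "X \<le> 1" "X \<le> 19 * t * \<psi> X"
proof -
  define x where "x = psi_inv \<psi> \<delta>"
  have x: "0 < x" "x \<le> 1" "\<psi> x = \<delta>"
    using psi_inv_le[OF \<delta>] by (simp_all add: x_def)
  define b where "b = r * norm xT"
  have b: "sqrt x / 2 < b" "b \<le> 1"
    using large pdelta_disc_tangent_le[OF disc] by (simp_all add: b_def x_def)
  have b0: "0 < b"
    using b(1) real_sqrt_gt_zero[OF x(1)] by linarith
  have "x / 4 < b\<^sup>2"
    using power_strict_mono[OF b(1), of 2] x by (simp add: power_divide)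
  moreover have "b\<^sup>2 \<le> 1"
    using b b0 by (simp add: power_le_one)
  ultimately have X: "0 < X" "X \<le> 1" "3 / 16 * x \<le> X"
    using b0 by (simp_all add: X_def flip: b_def)
  then show "0 < X" "X \<le> 1"
    by simp_all
  have "3 / 16 * \<delta> \<le> \<psi> X"
    using level_le_scaled[OF x(1,2) X(1,2), of "3 / 16"] X x by simp
  moreover have "b / 2 * (b / 2 + b) = X"
    by (simp add: X_def b_def power2_eq_square)
  then have "b / t \<le> 2 * (\<psi> X + \<delta>) / (b / 2)"
    using pdelta_disc_normal_le[OF disc mono, of "b / 2"] b b0 t X(2)
    by (simp add: b_def field_simps)
  then have "b * b / t \<le> 4 * \<psi> X + 4 * \<delta>"
    using b0 by (simp add: field_simps)
  ultimately have "b * b / t \<le> 76 / 3 * \<psi> X"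
    by linarith
  then show "X \<le> 19 * t * \<psi> X"
    using t by (simp add: X_def b_def divide_le_eq power2_eq_square mult_ac)
qed

lemma pdelta_disc_normal_le_large_tangent:
  assumes disc: "pdelta_disc \<psi> \<delta> (xN, xT) r \<phi>" and \<delta>: "0 < \<delta>" "\<delta> \<le> \<psi> 1"
    and large: "sqrt (psi_inv \<psi> \<delta>) / 2 < r * norm xT"
    and t: "0 < t" "norm xT = t * norm xN" and y: "0 < y" "y \<le> 1" "8 * t * (\<psi> y / y) = 1"
  shows "r * norm xN < 2 * K * sqrt y / t"
proof -
  define b where "b = r * norm xT"
  define X where "X = 3 * b\<^sup>2 / 4"
  have X: "0 < X" "X \<le> 1" "X \<le> 19 * t * \<psi> X"
    using pdelta_disc_large_tangent_ratio[OF disc \<delta> large t] by (simp_all add: X_def b_def)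
  have "\<psi> y / y / 4 = 1 / (32 * t)"
    using y(3) t by (simp add: field_simps)
  also have "\<dots> < 1 / (19 * t)"
    using t by (simp add: field_simps)
  also have "\<dots> \<le> \<psi> X / X"
    using X t by (simp add: field_simps)
  finally have "X < K\<^sup>2 * y"
    using ratio_le_quarter[OF y(1) _ X(2)] by (meson not_le)
  then have "b\<^sup>2 < 4 / 3 * (K\<^sup>2 * y)"
    by (simp add: X_def)
  also have "\<dots> \<le> (2 * K * sqrt y)\<^sup>2"
    using y by (simp add: power_mult_distrib)
  finally have "b\<^sup>2 < (2 * K * sqrt y)\<^sup>2" .
  moreover have "0 \<le> 2 * K * sqrt y"
    using K y by simp
  ultimately have "b < 2 * K * sqrt y"
    by (rule power_less_imp_less_base)
  moreover have "0 \<le> b"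
    using pdelta_discD(1)[OF disc] by (simp add: b_def)
  ultimately show ?thesis
    using t by (simp add: b_def field_simps)
qed

lemma kobayashi_ge:
  assumes \<delta>: "0 < \<delta>" "\<delta> \<le> \<psi> 1" "\<delta> < 1"
    and t: "0 < t" "norm xT = t * norm xN" and y: "0 < y" "y \<le> 1" "8 * t * (\<psi> y / y) = 1"
  shows "1 / (8 + 16 * K) * min (sqrt (psi_inv \<psi> \<delta>) / \<delta>) (8 * t / sqrt y) * norm xN
    \<le> kobayashi (Gpsi \<psi>) (pdelta \<delta>) (xN, xT)"
proof (rule kobayashi_greatest)
  show "\<exists>r \<phi>. pdelta_disc \<psi> \<delta> (xN, xT) r \<phi>"
    using \<delta> by (intro pdelta_disc_exists psi_nonneg mono) auto
  fix r \<phi> assume disc: "pdelta_disc \<psi> \<delta> (xN, xT) r \<phi>"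
  define x where "x = psi_inv \<psi> \<delta>"
  have x: "0 < x" "x \<le> 1" "\<psi> x = \<delta>"
    using psi_inv_le[OF \<delta>(1,2)] by (simp_all add: x_def)
  have r: "0 < r"
    using pdelta_discD(1)[OF disc] .
  define F where "F = min (sqrt x / \<delta>) (8 * t / sqrt y)"
  have F: "0 \<le> F" "F \<le> sqrt x / \<delta>" "F \<le> 8 * t / sqrt y"
    using x \<delta> t y by (simp_all add: F_def)
  have K0: "0 < K"
    using K by simp
  consider "r * norm xN \<le> 8 * \<delta> / sqrt x" | "r * norm xN < 2 * K * sqrt y / t"
    using pdelta_disc_normal_le_sqrt[OF disc mono x] pdelta_disc_normal_le_large_tangent[OF disc \<delta>(1,2) _ t y]
    unfolding x_def by linarith
  then have "1 / (8 + 16 * K) * F * norm xN \<le> 1 / r"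
  proof cases
    case 1
    have "1 / (8 + 16 * K) * F * norm xN \<le> 1 / 8 * (sqrt x / \<delta>) * norm xN"
      using F K0 by (intro mult_right_mono mult_mono) (auto simp: field_simps)
    also have "\<dots> \<le> 1 / r"
      using 1 r x \<delta> by (simp add: field_simps)
    finally show ?thesis .
  next
    case 2
    have "1 / (8 + 16 * K) * F * norm xN \<le> 1 / (16 * K) * (8 * t / sqrt y) * norm xN"
      using F K0 by (intro mult_right_mono mult_mono) (auto simp: field_simps)
    also have "\<dots> \<le> 1 / r"
      using 2 r t y K0 by (simp add: field_simps)
    finally show ?thesis .
  qed
  then show "1 / (8 + 16 * K) * min (sqrt (psi_inv \<psi> \<delta>) / \<delta>) (8 * t / sqrt y) * norm xN \<le> 1 / r"
    by (simp add: F_def x_def)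
qed

end

context halving_profile
begin

lemma kobayashi_le_min:
  assumes \<delta>: "0 < \<delta>" "\<delta> \<le> \<psi> 1" "\<delta> < 1"
    and c1: "0 < c1" "c1 \<le> 1 / 2" "2 * c1 * \<psi> 1 \<le> 1 - \<delta>"
    and c2: "0 < c2" "c2 \<le> 1 / (2 * K\<^sup>2)" "16 * c2 * \<psi> 1 \<le> 1 - \<delta>"
    and xN: "xN \<noteq> 0" and tangent: "norm xT \<le> norm xN"
    and t: "0 < t" "norm xT = t * norm xN" and y: "0 < y" "y \<le> 1" "8 * t * (\<psi> y / y) = 1"
  shows "kobayashi (Gpsi \<psi>) (pdelta \<delta>) (xN, xT)
    \<le> max (1 / c1) (1 / (8 * c2)) * min (sqrt (psi_inv \<psi> \<delta>) / \<delta>) (8 * t / sqrt y) * norm xN"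
proof -
  define x where "x = psi_inv \<psi> \<delta>"
  have x: "0 < x" "x \<le> 1" "\<psi> x = \<delta>"
    using psi_inv_le[OF \<delta>(1,2)] by (simp_all add: x_def)
  have growth: "\<delta> * sqrt (s / x) \<le> \<psi> s" if "x \<le> s" "s \<le> 1" for s
    using normal_growth[OF x(1) that] x by (simp add: mult.commute)
  have "\<delta> / sqrt x \<le> \<psi> 1"
    using growth[OF x(2) order.refl] by (simp add: real_sqrt_divide)
  then have "2 * c1 * \<delta> \<le> 2 * c1 * (\<psi> 1 * sqrt x)"
    using c1 x by (intro mult_left_mono) (auto simp: field_simps)
  also have "\<dots> \<le> sqrt x"
    using c1(3) \<delta> x mult_right_mono[OF c1(3), of "sqrt x"] by (simp add: mult_ac)
  finally have "2 * c1 * \<delta> * norm xT \<le> sqrt x * norm xN"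
    using tangent c1 \<delta> x by (intro mult_mono) auto
  then have A: "kobayashi (Gpsi \<psi>) (pdelta \<delta>) (xN, xT) \<le> 1 / c1 * (sqrt x / \<delta>) * norm xN"
    using kobayashi_le_normal[OF psi_nonneg mono \<delta>(1) x(1,2) growth c1(1,2) _ xN] c1 \<delta> by simp
  have "xT \<noteq> 0"
    using t xN by auto
  then have B: "kobayashi (Gpsi \<psi>) (pdelta \<delta>) (xN, xT) \<le> 1 / (8 * c2) * (8 * t / sqrt y) * norm xN"
    using kobayashi_le_tangent[OF \<delta>(1) c2(1,2) _ _ t y] c2 \<delta> by simp
  show ?thesis
  proof (cases "sqrt x / \<delta> \<le> 8 * t / sqrt y")
    case True
    have "1 / c1 * (sqrt x / \<delta>) * norm xN \<le> max (1 / c1) (1 / (8 * c2)) * (sqrt x / \<delta>) * norm xN"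
      using x \<delta> by (intro mult_right_mono) auto
    then show ?thesis
      using A True by (simp add: x_def)
  next
    case False
    have "1 / (8 * c2) * (8 * t / sqrt y) * norm xN \<le> max (1 / c1) (1 / (8 * c2)) * (8 * t / sqrt y) * norm xN"
      using t y by (intro mult_right_mono) auto
    then show ?thesis
      using B False by (simp add: x_def)
  qed
qed

lemma tangent_ratio_point:
  assumes xN: "xN \<noteq> 0" and unique: "\<exists>!s. s \<in> {0<..1} \<and> \<psi> s / s = 1 / (8 * (norm xT / norm xN))"
  obtains t y where "0 < t" "norm xT = t * norm xN" "0 < y" "y \<le> 1" "8 * t * (\<psi> y / y) = 1"
    "\<And>\<delta>. F3 \<psi> \<delta> (norm xT / norm xN) = min (sqrt (psi_inv \<psi> \<delta>) / \<delta>) (8 * t / sqrt y)"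
proof -
  define t where "t = norm xT / norm xN"
  obtain y where y: "y \<in> {0<..1}" "\<psi> y / y = 1 / (8 * t)"
    using unique by (auto simp: t_def)
  have inv: "psi1_inv \<psi> (1 / (8 * t)) = y"
    unfolding psi1_inv_def using unique y by (intro the1_equality) (auto simp: t_def)
  have "0 < \<psi> y / y"
    using psi_pos[of y] y(1) by simp
  then have "0 < 1 / (8 * t)"
    using y(2) by simp
  then have t: "0 < t"
    by (simp add: zero_less_divide_1_iff)
  have tN: "norm xT = t * norm xN"
    using xN by (simp add: t_def)
  have ty: "8 * t * (\<psi> y / y) = 1"
    using y t by simp
  have F3: "F3 \<psi> \<delta> (norm xT / norm xN) = min (sqrt (psi_inv \<psi> \<delta>) / \<delta>) (8 * t / sqrt y)" for \<delta>
    unfolding F3_def inv[unfolded t_def] by (simp add: t_def)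
  show ?thesis
    using y(1) by (intro that[OF t tN _ _ ty F3]) auto
qed

lemma kobayashi_estimate:
  fixes \<delta>0 :: real
  assumes \<delta>0: "0 < \<delta>0" "\<delta>0 < 1"
  shows "\<exists>c C. 0 < c \<and> c < C \<and>
          (\<forall>\<delta> xN xT. 0 < \<delta> \<and> \<delta> \<le> \<delta>0 \<and> \<delta> \<le> \<psi> 1 \<and> xN \<noteq> 0 \<and> norm xT \<le> norm xN \<and>
             (\<exists>!s. s \<in> {0<..1} \<and> \<psi> s / s = 1 / (8 * (norm xT / norm xN)))
           \<longrightarrow> c * F3 \<psi> \<delta> (norm xT / norm xN) * norm xN \<le> kobayashi (Gpsi \<psi>) (pdelta \<delta>) (xN, xT)
             \<and> kobayashi (Gpsi \<psi>) (pdelta \<delta>) (xN, xT) \<le> C * F3 \<psi> \<delta> (norm xT / norm xN) * norm xN)"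
proof (intro exI conjI allI impI)
  define c1 where "c1 = min (1 / 2) ((1 - \<delta>0) / (2 * \<psi> 1))"
  define c2 where "c2 = min (1 / (2 * K\<^sup>2)) ((1 - \<delta>0) / (16 * \<psi> 1))"
  define c where "c = 1 / (8 + 16 * K)"
  define C where "C = max (1 / c1) (1 / (8 * c2))"
  have "c1 \<le> (1 - \<delta>0) / (2 * \<psi> 1)" "c2 \<le> (1 - \<delta>0) / (16 * \<psi> 1)"
    by (simp_all add: c1_def c2_def)
  then have "2 * c1 * \<psi> 1 \<le> 1 - \<delta>0" "16 * c2 * \<psi> 1 \<le> 1 - \<delta>0"
    using psi1 by (simp_all add: field_simps)
  moreover have "0 < c1" "0 < c2"
    using \<delta>0 psi1 K by (simp_all add: c1_def c2_def)
  ultimately have c1: "0 < c1" "c1 \<le> 1 / 2" "2 * c1 * \<psi> 1 \<le> 1 - \<delta>0"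
    and c2: "0 < c2" "c2 \<le> 1 / (2 * K\<^sup>2)" "16 * c2 * \<psi> 1 \<le> 1 - \<delta>0"
    by (simp_all add: c1_def c2_def)
  show c: "0 < c"
    using K by (simp add: c_def)
  show "c < C + c"
    using c1 by (simp add: C_def less_max_iff_disj)
  fix \<delta> :: real and xN xT :: complex
  assume "0 < \<delta> \<and> \<delta> \<le> \<delta>0 \<and> \<delta> \<le> \<psi> 1 \<and> xN \<noteq> 0 \<and> norm xT \<le> norm xN \<and>
    (\<exists>!s. s \<in> {0<..1} \<and> \<psi> s / s = 1 / (8 * (norm xT / norm xN)))"
  then have \<delta>: "0 < \<delta>" "\<delta> \<le> \<delta>0" "\<delta> \<le> \<psi> 1" and xN: "xN \<noteq> 0" and tangent: "norm xT \<le> norm xN"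
    and unique: "\<exists>!s. s \<in> {0<..1} \<and> \<psi> s / s = 1 / (8 * (norm xT / norm xN))"
    by auto
  obtain t y where t: "0 < t" "norm xT = t * norm xN" and y': "0 < y" "y \<le> 1" "8 * t * (\<psi> y / y) = 1"
    and F3: "F3 \<psi> \<delta> (norm xT / norm xN) = min (sqrt (psi_inv \<psi> \<delta>) / \<delta>) (8 * t / sqrt y)"
    using tangent_ratio_point[OF xN unique] by metis
  have \<delta>1: "\<delta> < 1"
    using \<delta> \<delta>0 by simp
  have "0 \<le> min (sqrt (psi_inv \<psi> \<delta>) / \<delta>) (8 * t / sqrt y) * norm xN"
    using psi_inv_le[OF \<delta>(1,3)] \<delta> t y' by simp
  then have "C * min (sqrt (psi_inv \<psi> \<delta>) / \<delta>) (8 * t / sqrt y) * norm xN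
      \<le> (C + c) * min (sqrt (psi_inv \<psi> \<delta>) / \<delta>) (8 * t / sqrt y) * norm xN"
    using c by (simp add: mult_right_mono distrib_right mult.assoc)
  then show "kobayashi (Gpsi \<psi>) (pdelta \<delta>) (xN, xT) \<le> (C + c) * F3 \<psi> \<delta> (norm xT / norm xN) * norm xN"
    using kobayashi_le_min[OF \<delta>(1,3) \<delta>1 c1(1,2) _ c2(1,2) _ xN tangent t y'] c1 c2 \<delta>
    unfolding F3 C_def by linarith
  show "c * F3 \<psi> \<delta> (norm xT / norm xN) * norm xN \<le> kobayashi (Gpsi \<psi>) (pdelta \<delta>) (xN, xT)"
    using kobayashi_ge[OF \<delta>(1,3) \<delta>1 t y'] unfolding F3 c_def .
qed

end

lemma kobayashi_estimate_halving:
  fixes \<psi> :: "real \<Rightarrow> real" and \<delta>0 :: real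
  assumes "continuous_on {0..1} \<psi>" "\<forall>x\<in>{0..1}. \<psi> x \<ge> 0" "\<psi> 0 = 0" "\<psi> 1 > 0"
    and \<delta>0: "0 < \<delta>0" "\<delta>0 < 1"
  shows "(mono_on {0<..<1} (\<lambda>x. \<psi> x / sqrt x) \<and>
      antimono_on {0<..<1} (\<lambda>x. \<psi> x / x) \<and>
      (\<exists>K>1. \<forall>x\<in>{0<..1/K}. \<psi> (K * x) / (K * x) \<le> 1/2 * (\<psi> x / x)))
     \<longrightarrow> (\<exists>c C. 0 < c \<and> c < C \<and>
          (\<forall>\<delta> xN xT. 0 < \<delta> \<and> \<delta> \<le> \<delta>0 \<and> \<delta> \<le> \<psi> 1 \<and> xN \<noteq> 0 \<and> norm xT \<le> norm xN \<and>
             (\<exists>!s. s \<in> {0<..1} \<and> \<psi> s / s = 1 / (8 * (norm xT / norm xN)))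
           \<longrightarrow> c * F3 \<psi> \<delta> (norm xT / norm xN) * norm xN \<le> kobayashi (Gpsi \<psi>) (pdelta \<delta>) (xN, xT)
             \<and> kobayashi (Gpsi \<psi>) (pdelta \<delta>) (xN, xT) \<le> C * F3 \<psi> \<delta> (norm xT / norm xN) * norm xN))"
  using halving_profile.kobayashi_estimate[OF _ \<delta>0] assms
  unfolding halving_profile_def halving_profile_axioms_def profile_def by blast

theorem theorem4:
  fixes \<psi> :: "real \<Rightarrow> real" and \<delta>0 :: real
  assumes cont: "continuous_on {0..1} \<psi>"
    and nonneg: "\<forall>x\<in>{0..1}. \<psi> x \<ge> 0"
    and psi0: "\<psi> 0 = 0"
    and psi1: "\<psi> 1 > 0"
    and d0: "0 < \<delta>0" "\<delta>0 < 1"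
  shows
    "((mono_on {0<..<1} (\<lambda>x. \<psi> x / sqrt x) \<and>
      antimono_on {0<..<1} (\<lambda>x. \<psi> x / x) \<and>
      (\<exists>K>1. \<forall>x\<in>{0<..1/K}. \<psi> (K * x) / (K * x) \<le> 1/2 * (\<psi> x / x)))
     \<longrightarrow> (\<exists>c C. 0 < c \<and> c < C \<and>
          (\<forall>\<delta> xN xT. 0 < \<delta> \<and> \<delta> \<le> \<delta>0 \<and> \<delta> \<le> \<psi> 1 \<and> xN \<noteq> 0 \<and> norm xT \<le> norm xN \<and>
             (\<exists>!s. s \<in> {0<..1} \<and> \<psi> s / s = 1 / (8 * (norm xT / norm xN)))
           \<longrightarrow> c * F3 \<psi> \<delta> (norm xT / norm xN) * norm xN \<le> kobayashi (Gpsi \<psi>) (pdelta \<delta>) (xN, xT)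
             \<and> kobayashi (Gpsi \<psi>) (pdelta \<delta>) (xN, xT) \<le> C * F3 \<psi> \<delta> (norm xT / norm xN) * norm xN)))
    \<and>
    (\<exists>c C. 0 < c \<and> c < C \<and>
       (\<forall>\<delta> xN xT. 0 < \<delta> \<and> \<delta> \<le> \<delta>0 \<longrightarrow>
          c * max ((norm xN - norm xT) / sqrt \<delta>) (norm xT) \<le> kobayashi (Gpsi (\<lambda>x. x)) (pdelta \<delta>) (xN, xT)
          \<and> kobayashi (Gpsi (\<lambda>x. x)) (pdelta \<delta>) (xN, xT) \<le> C * max ((norm xN - norm xT) / sqrt \<delta>) (norm xT)))
    \<and>
    (mono_on {0<..<1} (\<lambda>x. \<psi> x / x)
     \<longrightarrow> (\<exists>C>0. \<forall>\<delta> xN xT. 0 < \<delta> \<and> \<delta> < \<psi> 1 \<and> \<delta> \<le> \<delta>0 \<and>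
            norm xT \<le> psi_inv \<psi> \<delta> / (8 * \<delta>) * norm xN
          \<longrightarrow> 1 / (4 * sqrt 2) * (sqrt (psi_inv \<psi> \<delta>) / \<delta>) * norm xN \<le> kobayashi (Gpsi \<psi>) (pdelta \<delta>) (xN, xT)
            \<and> kobayashi (Gpsi \<psi>) (pdelta \<delta>) (xN, xT) \<le> C * (sqrt (psi_inv \<psi> \<delta>) / \<delta>) * norm xN))"
  using kobayashi_estimate_halving[OF assms] kobayashi_estimate_id[OF d0]
    kobayashi_estimate_increasing_ratio[OF assms]
  by blast

end
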